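(* With the notation of the context, $\rho(C_1)$ is a self-orthogonal additive code with $\rho(C_1)^\perp=\rho(C_1^\perp)$, $|\rho(C_1)|=2^{nn_2-m(n-2k)}$, $|\rho(C_1^\perp)|=2^{nn_2+m(n-2k)}$, so it defines an $[[nn_2,m(n-2k)]]$ stabilizer quantum code $Q$ (of rate $r(1-2r')$ with $r=m/n_2$, $r'=k/n$); moreover every vector of $\rho(C_1^\perp)\setminus\rho(C_1)$ has weight at least $d_2(k+1)$. Consequently the relative minimum distance $\delta$ of $Q$ satisfies $\delta\ge \frac{d_2}{n_2}\,r'$; in particular, if $d_2/n_2\ge H_4^{-1}\!\left(\frac{1-r}{2}\right)$ then $\delta\ge r'\,H_4^{-1}\!\left(\frac{1-r}{2}\right)$.
   Context: $\mathbb{F}_4=\{0,1,\omega,\omega^2\}$, $\omega^2=\omega+1$, $\bar x=x^2$; trace inner product $\langle u,v\rangle=\sum_i(u_i\bar v_i+\bar u_iv_i)\in\mathbb{F}_2$; additive codes are $\mathbb{F}_2$-subspaces of $\mathbb{F}_4^N$, $C^\perp$ is the trace dual, self-orthogonal means $C\subseteq C^\perp$; weight = number of nonzero coordinates; an $[[N,K,D]]$ stabilizer code is given by a self-orthogonal additive $C$ with $|C|=2^{N-K}$ such that all vectors of $C^\perp\setminus C$ have weight $\ge D$; relative minimum distance is $D/N$. $H_4(x)=-x\log_4\frac x3-(1-x)\log_4(1-x)$, and $H_4^{-1}$ is the inverse of its restriction to $(0,3/4]$. Outer code (quantum Reed–Solomon code): let $m\ge2$, $n=2^m-1$, and $1\le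 k\le 2^{m-1}-1$. Let $\alpha$ be a primitive element of $\mathbb{F}_{2^m}$ and $C_{\rm RS}\subseteq\mathbb{F}_{2^m}^n$ the cyclic Reed–Solomon code with generator polynomial $\prod_{i=0}^{n-k-1}(x-\alpha^i)$ (dimension $k$); its dual $C_{\rm RS}^\perp$ (standard inner product) has dimension $n-k$ and minimum distance $k+1$, and $C_{\rm RS}\subseteq C_{\rm RS}^\perp$. Fix a self-dual basis $\mathcal B=\{b_1,\dots,b_m\}$ of $\mathbb{F}_{2^m}$ over $\mathbb{F}_2$; the binary expansion of a code $D\subseteq\mathbb{F}_{2^m}^n$ is $\mathcal B(D)=\{(c_{ij})\in\mathbb{F}_2^{nm}:(\sum_j c_{ij}b_j)_i\in D\}$. Put $C_1=\omega\mathcal B(C_{\rm RS})+\bar\omega\mathcal B(C_{\rm RS})$ and $C_1^\perp=\omega\mathcal B(C_{\rm RS}^\perp)+\bar\omega\mathcal B(C_{\rm RS}^\perp)$, additive codes in $\mathbb{F}_4^{nm}$; $C_1^\perp$ is the trace dual of $C_1$. Write vectors of $\mathbb{F}_4^{nm}$ as $(v_1,\dots,v_n)$ with blocks $v_i\in\mathbb{F}_4^m$ (block $i$ = the $m$ coordinates coming from the $i$-th Reed–Solomon position). Inner code: let $C_2\subseteq C_2^\perp\subseteq\mathbb{F}_4^{n_2}$ define an $[[n_2,m,d_2]]$ stabilizer code ($|C_2|=2^{n_2-m}$). The trace inner product induces a nondegenerate symplectic form on the $2m$-dimensional $\mathbb{F}_2$-space $C_2^\perp/C_2$ by $\langle u+C_2,v+C_2\rangle=\langle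 u,v\rangle$. Let $\rho:\mathbb{F}_4^m\to C_2^\perp/C_2$ be an $\mathbb{F}_2$-linear bijection with $\langle\rho(u),\rho(v)\rangle=\langle u,v\rangle$. For $D\in\{C_1,C_1^\perp\}$ define $\rho(D)=\{(w_1,\dots,w_n)\in(\mathbb{F}_4^{n_2})^n:\ \exists (v_1,\dots,v_n)\in D \text{ with } w_i\in\rho(v_i)\ \forall i\}$ (each $w_i$ ranges over the whole coset $\rho(v_i)$). *)

theory Defs
  imports Complex_Main "HOL-Computational_Algebra.Polynomial"
begin

definition vecs :: "nat \<Rightarrow> (nat \<Rightarrow> 'a::zero) set" where
  "vecs N = {v. \<forall>i\<ge>N. v i = 0}"

definition vadd :: "(nat \<Rightarrow> 'a::plus) \<Rightarrow> (nat \<Rightarrow> 'a) \<Rightarrow> nat \<Rightarrow> 'a" where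
  "vadd u v = (\<lambda>i. u i + v i)"

text \<open>Trace inner product on F4^N, conjugation = squaring; value lies in F2 = {0,1}.\<close>
definition tip :: "nat \<Rightarrow> (nat \<Rightarrow> 'q::field) \<Rightarrow> (nat \<Rightarrow> 'q) \<Rightarrow> 'q" where
  "tip N u v = (\<Sum>i<N. u i * (v i)^2 + (u i)^2 * v i)"

definition additive :: "nat \<Rightarrow> (nat \<Rightarrow> 'q::field) set \<Rightarrow> bool" where
  "additive N C \<longleftrightarrow> C \<subseteq> vecs N \<and> (\<lambda>_. 0) \<in> C \<and> (\<forall>u\<in>C. \<forall>v\<in>C. vadd u v \<in> C)"

definition tdual :: "nat \<Rightarrow> (nat \<Rightarrow> 'q::field) set \<Rightarrow> (nat \<Rightarrow> 'q) set" where
  "tdual N C = {v \<in> vecs N. \<forall>u\<in>C. tip N u v = 0}"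

definition self_orthogonal :: "nat \<Rightarrow> (nat \<Rightarrow> 'q::field) set \<Rightarrow> bool" where
  "self_orthogonal N C \<longleftrightarrow> C \<subseteq> tdual N C"

definition weight :: "nat \<Rightarrow> (nat \<Rightarrow> 'a::zero) \<Rightarrow> nat" where
  "weight N v = card {i. i < N \<and> v i \<noteq> 0}"

definition stabilizer_code :: "nat \<Rightarrow> nat \<Rightarrow> nat \<Rightarrow> (nat \<Rightarrow> 'q::field) set \<Rightarrow> bool" where
  "stabilizer_code N K D C \<longleftrightarrow> additive N C \<and> self_orthogonal N C \<and> K \<le> N \<and>
     card C = 2 ^ (N - K) \<and> (\<forall>v \<in> tdual N C - C. D \<le> weight N v)"

definition min_dist :: "nat \<Rightarrow> (nat \<Rightarrow> 'q::field) set \<Rightarrow> nat" where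
  "min_dist N C = Min (weight N ` (tdual N C - C))"

definition rel_min_dist :: "nat \<Rightarrow> (nat \<Rightarrow> 'q::field) set \<Rightarrow> real" where
  "rel_min_dist N C = real (min_dist N C) / real N"

definition primitive_elem :: "'f::field \<Rightarrow> bool" where
  "primitive_elem a \<longleftrightarrow> (\<forall>x. x \<noteq> 0 \<longrightarrow> (\<exists>i::nat. x = a ^ i))"

definition cyclic_code :: "nat \<Rightarrow> 'f::field poly \<Rightarrow> (nat \<Rightarrow> 'f) set" where
  "cyclic_code n g = {c \<in> vecs n. g dvd (\<Sum>i<n. monom (c i) i)}"

definition RS_code :: "nat \<Rightarrow> nat \<Rightarrow> 'f::field \<Rightarrow> (nat \<Rightarrow> 'f) set" where
  "RS_code n k a = cyclic_code n (\<Prod>i<n - k. [:- (a ^ i), 1:])"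

definition std_dual :: "nat \<Rightarrow> (nat \<Rightarrow> 'f::field) set \<Rightarrow> (nat \<Rightarrow> 'f) set" where
  "std_dual n C = {v \<in> vecs n. \<forall>u\<in>C. (\<Sum>i<n. u i * v i) = 0}"

definition trace2 :: "nat \<Rightarrow> 'f::field \<Rightarrow> 'f" where
  "trace2 m x = (\<Sum>i<m. x ^ (2 ^ i))"

definition self_dual_basis :: "nat \<Rightarrow> (nat \<Rightarrow> 'f::field) \<Rightarrow> bool" where
  "self_dual_basis m b \<longleftrightarrow>
     bij_betw (\<lambda>c. \<Sum>j<m. of_bool (c j) * b j) {c :: nat \<Rightarrow> bool. \<forall>j\<ge>m. \<not> c j} UNIV \<and>
     (\<forall>i<m. \<forall>j<m. trace2 m (b i * b j) = (if i = j then 1 else 0))"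

text \<open>Binary expansion: binary coordinate c_{ij} (position i, basis index j) sits at index i*m+j.\<close>
definition bin_exp :: "nat \<Rightarrow> nat \<Rightarrow> (nat \<Rightarrow> 'f::field) \<Rightarrow> (nat \<Rightarrow> 'f) set \<Rightarrow> (nat \<Rightarrow> bool) set" where
  "bin_exp n m b D = {c. (\<forall>p\<ge>n * m. \<not> c p) \<and> (\<lambda>i. \<Sum>j<m. of_bool (c (i * m + j)) * b j) \<in> D}"

text \<open>omega * B(D) + omega-bar * B(D) as an additive code in F4^{nm}.\<close>
definition omega_lift :: "'q::field \<Rightarrow> (nat \<Rightarrow> bool) set \<Rightarrow> (nat \<Rightarrow> 'q) set" where
  "omega_lift w B = {(\<lambda>p. w * of_bool (x p) + w^2 * of_bool (y p)) | x y. x \<in> B \<and> y \<in> B}"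

definition cosets_quot :: "nat \<Rightarrow> (nat \<Rightarrow> 'q::field) set \<Rightarrow> (nat \<Rightarrow> 'q) set set" where
  "cosets_quot N C = {(\<lambda>w. vadd v w) ` C | v. v \<in> tdual N C}"

definition coset_add :: "(nat \<Rightarrow> 'q::field) set \<Rightarrow> (nat \<Rightarrow> 'q) set \<Rightarrow> (nat \<Rightarrow> 'q) set" where
  "coset_add A B = {vadd a b | a b. a \<in> A \<and> b \<in> B}"

definition block :: "nat \<Rightarrow> nat \<Rightarrow> (nat \<Rightarrow> 'a::zero) \<Rightarrow> nat \<Rightarrow> 'a" where
  "block L i v = (\<lambda>j. if j < L then v (i * L + j) else 0)"

definition rho_code :: "nat \<Rightarrow> nat \<Rightarrow> nat \<Rightarrow> ((nat \<Rightarrow> 'q::field) \<Rightarrow> (nat \<Rightarrow> 'q) set)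
    \<Rightarrow> (nat \<Rightarrow> 'q) set \<Rightarrow> (nat \<Rightarrow> 'q) set" where
  "rho_code n m n2 \<rho> D = {w \<in> vecs (n * n2). \<exists>v\<in>D. \<forall>i<n. block n2 i w \<in> \<rho> (block m i v)}"

definition H4 :: "real \<Rightarrow> real" where
  "H4 x = - x * log 4 (x / 3) - (1 - x) * log 4 (1 - x)"

definition H4_inv :: "real \<Rightarrow> real" where
  "H4_inv y = (THE x. 0 < x \<and> x \<le> 3/4 \<and> H4 x = y)"

end

theory Submission
  imports Defs "HOL-Computational_Algebra.Primes" "HOL-Library.FuncSet"
begin

text \<open>
  In characteristic two the trace form identifies \<open>\<omega> a + \<omega>\<^sup>2 c\<close> with the pair \<open>(a, c)\<close>
  carrying the standard symplectic form of \<open>\<bbbF>\<^sub>2\<^sup>2\<close>, and a self-dual basis of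
  \<open>GF(2\<^sup>m)\<close> turns the trace of the standard inner product into the binary inner
  product of the expansions. Hence the trace dual of the outer code
  \<open>C\<^sub>1 = \<omega> B(RS) + \<omega>\<^sup>2 B(RS)\<close> is the lift of the expansion of \<open>RS\<^sup>\<bottom>\<close>, and
  \<open>C\<^sub>1 \<subseteq> C\<^sub>1\<^sup>\<bottom>\<close> because \<open>RS \<subseteq> RS\<^sup>\<bottom>\<close> for \<open>2 k < n\<close>.
  Concatenation replaces the \<open>i\<close>-th block of \<open>m\<close> symbols by the corresponding coset of
  \<open>C\<^sub>2\<close> in \<open>C\<^sub>2\<^sup>\<bottom>\<close>. As \<open>\<rho>\<close> is an additive isometry of the symplectic forms, additivity
  and duality carry over blockwise, and every block contributes a factor \<open>|C\<^sub>2|\<close> to the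
  cardinalities. A word of the dual concatenated code outside the code lies over a nonzero
  outer word; its \<open>RS\<^sup>\<bottom>\<close> components have at least \<open>k + 1\<close> nonzero symbols, so at least
  \<open>k + 1\<close> blocks lie in non-trivial cosets of \<open>C\<^sub>2\<close>, each of weight at least \<open>d\<^sub>2\<close>.
\<close>

section \<open>Fields of characteristic two\<close>

lemma of_nat_card_UNIV_eq_0: "(of_nat (card (UNIV :: 'a::{ring_1,finite} set)) :: 'a) = 0"
proof -
  have "(\<Sum>x\<in>UNIV. x + 1) = (\<Sum>x\<in>UNIV. x :: 'a)"
    by (rule sum.reindex_bij_witness[where i="\<lambda>x. x - 1" and j="\<lambda>x. x + 1"]) auto
  then show ?thesis
    by (simp add: sum.distrib)
qed

lemma CHAR_eq_2_if_card_power_2: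
  assumes "card (UNIV :: 'a::{field,finite} set) = 2 ^ m"
  shows "CHAR('a) = 2"
proof -
  have "prime CHAR('a)"
    by (simp add: finite_imp_CHAR_pos prime_CHAR_semidom)
  moreover have "CHAR('a) dvd card (UNIV :: 'a set)"
    using of_nat_card_UNIV_eq_0 of_nat_eq_0_iff_char_dvd by blast
  ultimately show ?thesis
    using assms by (metis prime_dvd_power primes_dvd_imp_eq two_is_prime_nat)
qed

lemma add_self_eq_0_if_CHAR_2:
  assumes "CHAR('a::ring_1) = 2"
  shows "x + x = (0::'a)"
proof -
  have "x + x = of_nat CHAR('a) * x"
    using assms by (simp add: mult_2)
  then show ?thesis
    by simp
qed

lemma of_nat_eq_0_iff_even_if_CHAR_2:
  assumes "CHAR('a::semiring_1_cancel) = 2"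
  shows "(of_nat N :: 'a) = 0 \<longleftrightarrow> even N"
  using assms by (simp add: of_nat_eq_0_iff_char_dvd)

lemma power_2_power_add_if_CHAR_2:
  assumes "CHAR('a::comm_semiring_1) = 2"
  shows "(x + y :: 'a) ^ (2 ^ i) = x ^ (2 ^ i) + y ^ (2 ^ i)"
  using assms by (intro freshmans_dream') simp_all

lemma power2_add_if_CHAR_2:
  assumes "CHAR('a::comm_semiring_1) = 2"
  shows "(x + y :: 'a)\<^sup>2 = x\<^sup>2 + y\<^sup>2"
  using power_2_power_add_if_CHAR_2[OF assms, of x y 1] by simp

section \<open>Vectors and blocks\<close>

lemma zero_in_vecs [simp]: "(\<lambda>_. 0) \<in> vecs N"
  by (simp add: vecs_def)

lemma vadd_in_vecs: "u \<in> vecs N \<Longrightarrow> v \<in> vecs N \<Longrightarrow> vadd (u :: nat \<Rightarrow> 'a::monoid_add) v \<in> vecs N"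
  by (simp add: vecs_def vadd_def)

lemma vadd_assoc: "vadd (vadd x y) z = vadd x (vadd y (z :: nat \<Rightarrow> 'a::semigroup_add))"
  by (simp add: vadd_def add.assoc)

lemma vadd_zero [simp]:
  "vadd (\<lambda>_. 0) (x :: nat \<Rightarrow> 'a::monoid_add) = x" "vadd x (\<lambda>_. 0) = x"
  by (simp_all add: vadd_def)

lemma vadd_self_if_CHAR_2: "CHAR('a::ring_1) = 2 \<Longrightarrow> vadd x x = (\<lambda>_. 0 :: 'a)"
  by (simp add: vadd_def add_self_eq_0_if_CHAR_2)

lemma vadd_eq_0_iff_if_CHAR_2:
  assumes "CHAR('a::ring_1) = 2"
  shows "vadd x y = (\<lambda>_. 0) \<longleftrightarrow> x = (y :: nat \<Rightarrow> 'a)"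
proof -
  have "x p + y p = 0 \<longleftrightarrow> x p = y p" for p
    using add_self_eq_0_if_CHAR_2[OF assms, of "y p"] by (metis add_right_cancel)
  then show ?thesis
    by (simp add: vadd_def fun_eq_iff)
qed

lemma vecs_eq_image_PiE:
  "vecs N = (\<lambda>g i. if i < N then g i else (0::'a::zero)) ` ({..<N} \<rightarrow>\<^sub>E UNIV)"
proof (intro equalityI subsetI)
  fix v :: "nat \<Rightarrow> 'a"
  assume "v \<in> vecs N"
  then have "v = (\<lambda>i. if i < N then restrict v {..<N} i else 0)"
    by (auto simp: vecs_def)
  moreover have "restrict v {..<N} \<in> {..<N} \<rightarrow>\<^sub>E UNIV"
    by simp
  ultimately show "v \<in> (\<lambda>g i. if i < N then g i else 0) ` ({..<N} \<rightarrow>\<^sub>E UNIV)"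
    by (rule image_eqI)
next
  fix v :: "nat \<Rightarrow> 'a"
  assume "v \<in> (\<lambda>g i. if i < N then g i else 0) ` ({..<N} \<rightarrow>\<^sub>E UNIV)"
  then obtain g where "v = (\<lambda>i. if i < N then g i else 0)"
    by blast
  then show "v \<in> vecs N"
    by (simp add: vecs_def)
qed

lemma finite_vecs [simp]: "finite (vecs N :: (nat \<Rightarrow> 'a::{zero,finite}) set)"
  by (simp add: vecs_eq_image_PiE finite_PiE)

lemma card_vecs: "card (vecs N :: (nat \<Rightarrow> 'a::{zero,finite}) set) = card (UNIV :: 'a set) ^ N"
proof -
  have "inj_on (\<lambda>g i. if i < N then g i else (0::'a)) ({..<N} \<rightarrow>\<^sub>E UNIV)"
  proof (rule inj_onI)
    fix g h :: "nat \<Rightarrow> 'a"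
    assume g: "g \<in> {..<N} \<rightarrow>\<^sub>E UNIV" and h: "h \<in> {..<N} \<rightarrow>\<^sub>E UNIV"
      and eq: "(\<lambda>i. if i < N then g i else 0) = (\<lambda>i. if i < N then h i else 0)"
    show "g = h"
    proof (rule PiE_ext[OF g h])
      fix i
      assume "i \<in> {..<N}"
      then show "g i = h i"
        using fun_cong[OF eq, of i] by simp
    qed
  qed
  then have "card (vecs N :: (nat \<Rightarrow> 'a) set) = card ({..<N} \<rightarrow>\<^sub>E (UNIV :: 'a set))"
    unfolding vecs_eq_image_PiE by (rule card_image)
  also have "\<dots> = card (UNIV :: 'a set) ^ N"
    by (subst card_PiE) auto
  finally show ?thesis .
qed

lemma tip_zero_left [simp]: "tip N (\<lambda>_. 0) x = 0"
  by (simp add: tip_def)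

lemma tip_vadd_right:
  "CHAR('a::field) = 2 \<Longrightarrow> tip N z (vadd x y) = tip N z x + tip N z (y :: nat \<Rightarrow> 'a)"
  by (simp add: tip_def vadd_def power2_add_if_CHAR_2 algebra_simps sum.distrib)

lemma sum_lessThan_mult: "(\<Sum>p<n * (L::nat). f p :: 'a::comm_monoid_add) = (\<Sum>i<n. \<Sum>j<L. f (i * L + j))"
proof -
  have "(\<Sum>j<L. f (i * L + j)) = sum f {i * L..<i * L + L}" for i
    using sum.shift_bounds_nat_ivl[of f 0 "i * L" L] by (simp add: atLeast0LessThan add.commute)
  then show ?thesis
    by (simp add: sum.nat_group)
qed

lemma weight_eq_sum: "weight N v = (\<Sum>p<N. of_bool (v p \<noteq> 0))"
proof -
  have "{i. i < N \<and> v i \<noteq> 0} = {..<N} \<inter> {p. v p \<noteq> 0}"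
    by auto
  then show ?thesis
    by (simp add: weight_def)
qed

lemma tip_blocks: "tip (n * L) w w' = (\<Sum>i<n. tip L (block L i w) (block L i w'))"
  by (simp add: tip_def block_def sum_lessThan_mult)

lemma weight_blocks: "weight (n * L) w = (\<Sum>i<n. weight L (block L i w))"
  by (simp add: weight_eq_sum block_def sum_lessThan_mult)

lemma block_in_vecs [simp]: "block L i w \<in> vecs L"
  by (simp add: block_def vecs_def)

lemma block_vadd: "block L i (vadd u v) = vadd (block L i u) (block L i (v :: nat \<Rightarrow> 'a::monoid_add))"
  by (simp add: block_def vadd_def fun_eq_iff)

lemma block_zero [simp]: "block L i (\<lambda>_. 0) = (\<lambda>_. 0)"
  by (simp add: block_def fun_eq_iff)

lemma vecs_eqI_blocks:
  assumes "w \<in> vecs (n * L)" "w' \<in> vecs (n * L)" "\<And>i. i < n \<Longrightarrow> block L i w = block L i w'"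
  shows "w = w'"
proof
  fix p
  show "w p = w' p"
  proof (cases "p < n * L")
    case True
    then have "0 < L"
      by (cases L) auto
    with True have "p div L < n"
      by (simp add: div_less_iff_less_mult mult.commute)
    then have "block L (p div L) w (p mod L) = block L (p div L) w' (p mod L)"
      using assms(3) by simp
    then show ?thesis
      using \<open>0 < L\<close> by (simp add: block_def)
  next
    case False
    then show ?thesis
      using assms(1,2) by (simp add: vecs_def)
  qed
qed

lemma block_index_less: "i < n \<Longrightarrow> j < L \<Longrightarrow> i * L + j < n * (L::nat)"
proof -
  assume "i < n" "j < L"
  then have "i * L + j < Suc i * L"
    by simp
  also have "\<dots> \<le> n * L"
    using \<open>i < n\<close> by (intro mult_le_mono1) simp
  finally show ?thesis .
qed

definition concat_blocks :: "nat \<Rightarrow> nat \<Rightarrow> (nat \<Rightarrow> nat \<Rightarrow> 'a::zero) \<Rightarrow> nat \<Rightarrow> 'a" where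
  "concat_blocks L n f = (\<lambda>p. if p < n * L then f (p div L) (p mod L) else 0)"

lemma concat_blocks_in_vecs [simp]: "concat_blocks L n f \<in> vecs (n * L)"
  by (simp add: concat_blocks_def vecs_def)

lemma block_concat_blocks:
  assumes "i < n" "f i \<in> vecs L"
  shows "block L i (concat_blocks L n f) = f i"
proof
  fix j
  show "block L i (concat_blocks L n f) j = f i j"
  proof (cases "j < L")
    case True
    then show ?thesis
      using block_index_less[OF assms(1) True] by (simp add: block_def concat_blocks_def)
  next
    case False
    then show ?thesis
      using assms(2) by (simp add: block_def vecs_def)
  qed
qed

section \<open>Binary vectors and the field of four elements\<close>

definition bvecs :: "nat \<Rightarrow> (nat \<Rightarrow> bool) set" where
  "bvecs N = {c. \<forall>p\<ge>N. \<not> c p}"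

\<comment> \<open>the binary inner product of \<open>x\<close> and \<open>y\<close> is the parity of \<open>overlap N x y\<close>\<close>
definition overlap :: "nat \<Rightarrow> (nat \<Rightarrow> bool) \<Rightarrow> (nat \<Rightarrow> bool) \<Rightarrow> nat" where
  "overlap N x y = card {p. p < N \<and> x p \<and> y p}"

definition bin_dual :: "nat \<Rightarrow> (nat \<Rightarrow> bool) set \<Rightarrow> (nat \<Rightarrow> bool) set" where
  "bin_dual N B = {y \<in> bvecs N. \<forall>x\<in>B. even (overlap N x y)}"

lemma overlap_eq_sum: "overlap N x y = (\<Sum>p<N. of_bool (x p \<and> y p))"
proof -
  have "{p. p < N \<and> x p \<and> y p} = {..<N} \<inter> {p. x p \<and> y p}"
    by auto
  then show ?thesis
    by (simp add: overlap_def)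
qed

lemma overlap_False [simp]: "overlap N (\<lambda>_. False) y = 0" "overlap N x (\<lambda>_. False) = 0"
  by (simp_all add: overlap_def)

locale F4 =
  fixes \<omega> :: "'q::{field,finite}"
  assumes card_F4: "card (UNIV :: 'q set) = 4"
    and omega_sq: "\<omega>\<^sup>2 = \<omega> + 1"
begin

lemma CHAR_F4: "CHAR('q) = 2"
  using CHAR_eq_2_if_card_power_2[of 2] card_F4 by simp

lemma F4_add_self [simp]: "x + x = (0::'q)"
  using add_self_eq_0_if_CHAR_2[OF CHAR_F4] .

lemma F4_two [simp]: "(2::'q) = 0"
  using F4_add_self[of 1] by (simp only: one_add_one)

lemma omega_plus_omega_sq: "\<omega> + \<omega>\<^sup>2 = 1"
  by (simp add: omega_sq flip: add.assoc)

lemma omega_mult_omega_sq: "\<omega> * \<omega>\<^sup>2 = 1"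
proof -
  have "\<omega> * \<omega>\<^sup>2 = \<omega>\<^sup>2 + \<omega>"
    by (simp add: omega_sq distrib_left power2_eq_square[symmetric])
  then show ?thesis
    using omega_plus_omega_sq by (simp add: add.commute)
qed

lemma omega_pow4: "\<omega> ^ 4 = \<omega>"
proof -
  have "\<omega> ^ 4 = \<omega> * (\<omega> * \<omega>\<^sup>2)"
    by (simp add: power2_eq_square power4_eq_xxxx)
  then show ?thesis
    by (simp add: omega_mult_omega_sq)
qed

lemma omega_distinct: "\<omega> \<noteq> 0" "\<omega> \<noteq> 1" "\<omega>\<^sup>2 \<noteq> 0" "\<omega>\<^sup>2 \<noteq> 1" "\<omega>\<^sup>2 \<noteq> \<omega>"
  using omega_sq omega_plus_omega_sq by auto

lemma UNIV_F4: "(UNIV :: 'q set) = {0, \<omega>, \<omega>\<^sup>2, 1}"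
proof -
  have "card {0, \<omega>, \<omega>\<^sup>2, 1 :: 'q} = 4"
    using omega_distinct by auto
  then show ?thesis
    using card_F4 by (metis card_subset_eq finite subset_UNIV)
qed

definition f4_of_bits :: "bool \<Rightarrow> bool \<Rightarrow> 'q" where
  "f4_of_bits a c = \<omega> * of_bool a + \<omega>\<^sup>2 * of_bool c"

lemma f4_of_bits_simps [simp]:
  "f4_of_bits False False = 0" "f4_of_bits True False = \<omega>"
  "f4_of_bits False True = \<omega>\<^sup>2" "f4_of_bits True True = 1"
  by (simp_all add: f4_of_bits_def omega_plus_omega_sq)

lemma f4_of_bits_eq_iff: "f4_of_bits a c = f4_of_bits a' c' \<longleftrightarrow> a = a' \<and> c = c'"
  by (cases a; cases c; cases a'; cases c') (simp_all add: omega_distinct omega_distinct[THEN not_sym])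

lemma f4_of_bits_eq_0_iff [simp]: "f4_of_bits a c = 0 \<longleftrightarrow> \<not> a \<and> \<not> c"
  using f4_of_bits_eq_iff[of a c False False] by simp

lemma omega_sums:
  "\<omega> + 1 = \<omega>\<^sup>2" "1 + \<omega> = \<omega>\<^sup>2" "\<omega>\<^sup>2 + 1 = \<omega>" "1 + \<omega>\<^sup>2 = \<omega>" "\<omega>\<^sup>2 + \<omega> = 1"
  using omega_sq omega_plus_omega_sq by (simp_all add: add.commute add.left_commute)

lemma omega_products:
  "\<omega> * \<omega> = \<omega>\<^sup>2" "\<omega>\<^sup>2 * \<omega> = 1" "\<omega>\<^sup>2 * \<omega>\<^sup>2 = \<omega>"
  using omega_mult_omega_sq omega_pow4 by (simp_all add: power2_eq_square mult.commute)

lemma f4_of_bits_add: "f4_of_bits a c + f4_of_bits a' c' = f4_of_bits (a \<noteq> a') (c \<noteq> c')"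
  by (cases a; cases c; cases a'; cases c') (simp_all add: omega_sums omega_plus_omega_sq)

lemma f4_of_bits_trace_form:
  "f4_of_bits a c * (f4_of_bits a' c')\<^sup>2 + (f4_of_bits a c)\<^sup>2 * f4_of_bits a' c'
     = of_bool (a \<and> c') + of_bool (c \<and> a')"
  by (cases a; cases c; cases a'; cases c')
    (simp_all add: omega_pow4 omega_mult_omega_sq omega_products omega_sums omega_plus_omega_sq)

definition f4_vec :: "(nat \<Rightarrow> bool) \<Rightarrow> (nat \<Rightarrow> bool) \<Rightarrow> nat \<Rightarrow> 'q" where
  "f4_vec x y = (\<lambda>p. f4_of_bits (x p) (y p))"

lemma omega_lift_eq_image: "omega_lift \<omega> B = (\<lambda>(x, y). f4_vec x y) ` (B \<times> B)"
  by (auto simp: omega_lift_def f4_vec_def f4_of_bits_def)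

lemma f4_vec_in_omega_lift: "x \<in> B \<Longrightarrow> y \<in> B \<Longrightarrow> f4_vec x y \<in> omega_lift \<omega> B"
  by (auto simp: omega_lift_eq_image)

lemma omega_liftE:
  assumes "v \<in> omega_lift \<omega> B"
  obtains x y where "x \<in> B" "y \<in> B" "v = f4_vec x y"
  using assms by (auto simp: omega_lift_eq_image)

lemma f4_vec_eq_iff: "f4_vec x y = f4_vec x' y' \<longleftrightarrow> x = x' \<and> y = y'"
  by (auto simp: f4_vec_def fun_eq_iff f4_of_bits_eq_iff)

lemma f4_vec_eq_0_iff: "f4_vec x y = (\<lambda>_. 0) \<longleftrightarrow> x = (\<lambda>_. False) \<and> y = (\<lambda>_. False)"
  by (auto simp: f4_vec_def fun_eq_iff)

lemma f4_vec_False [simp]: "f4_vec (\<lambda>_. False) (\<lambda>_. False) = (\<lambda>_. 0)"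
  by (simp add: f4_vec_def)

lemma f4_vec_eq_0_at_iff: "f4_vec x y p = 0 \<longleftrightarrow> \<not> x p \<and> \<not> y p"
  by (simp add: f4_vec_def)

lemma vadd_f4_vec: "vadd (f4_vec x y) (f4_vec x' y') = f4_vec (\<lambda>p. x p \<noteq> x' p) (\<lambda>p. y p \<noteq> y' p)"
  by (simp add: vadd_def f4_vec_def f4_of_bits_add)

lemma f4_vec_in_vecs: "x \<in> bvecs N \<Longrightarrow> y \<in> bvecs N \<Longrightarrow> f4_vec x y \<in> vecs N"
  by (simp add: bvecs_def vecs_def f4_vec_def)

lemma card_omega_lift: "finite B \<Longrightarrow> card (omega_lift \<omega> B) = card B ^ 2"
  by (simp add: omega_lift_eq_image card_image inj_on_def f4_vec_eq_iff card_cartesian_product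
      power2_eq_square)

lemma omega_lift_mono: "B \<subseteq> B' \<Longrightarrow> omega_lift \<omega> B \<subseteq> omega_lift \<omega> B'"
  by (auto simp: omega_lift_def)

lemma omega_lift_subset_vecs: "B \<subseteq> bvecs N \<Longrightarrow> omega_lift \<omega> B \<subseteq> vecs N"
  by (auto simp: omega_lift_eq_image intro: f4_vec_in_vecs)

lemma vecs_f4_vecE:
  assumes "v \<in> vecs N"
  obtains x y where "x \<in> bvecs N" "y \<in> bvecs N" "v = f4_vec x y"
proof
  let ?x = "\<lambda>p. v p = \<omega> \<or> v p = 1" and ?y = "\<lambda>p. v p = \<omega>\<^sup>2 \<or> v p = 1"
  show "?x \<in> bvecs N" "?y \<in> bvecs N"
    using assms omega_distinct by (auto simp: vecs_def bvecs_def)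
  have "v p = f4_of_bits (?x p) (?y p)" for p
  proof -
    have "v p \<in> {0, \<omega>, \<omega>\<^sup>2, 1}"
      using UNIV_F4 by blast
    then show ?thesis
      by (elim insertE emptyE) (simp_all add: omega_distinct omega_distinct[THEN not_sym])
  qed
  then show "v = f4_vec ?x ?y"
    by (simp add: f4_vec_def fun_eq_iff)
qed

lemma tip_f4_vec: "tip N (f4_vec x y) (f4_vec x' y') = of_nat (overlap N x y' + overlap N y x')"
  by (simp add: tip_def f4_vec_def overlap_eq_sum f4_of_bits_trace_form sum.distrib)

lemma additive_omega_lift:
  assumes "B \<subseteq> bvecs N" "(\<lambda>_. False) \<in> B"
    and "\<And>x y. x \<in> B \<Longrightarrow> y \<in> B \<Longrightarrow> (\<lambda>p. x p \<noteq> y p) \<in> B"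
  shows "additive N (omega_lift \<omega> B)"
  unfolding additive_def
proof (intro conjI ballI)
  show "omega_lift \<omega> B \<subseteq> vecs N"
    using assms(1) by (rule omega_lift_subset_vecs)
  show "(\<lambda>_. 0) \<in> omega_lift \<omega> B"
    using f4_vec_in_omega_lift[OF assms(2) assms(2)] by simp
  fix u v
  assume "u \<in> omega_lift \<omega> B" "v \<in> omega_lift \<omega> B"
  then show "vadd u v \<in> omega_lift \<omega> B"
    by (elim omega_liftE) (simp only: vadd_f4_vec, intro f4_vec_in_omega_lift assms(3))
qed

lemma tdual_omega_lift:
  assumes "(\<lambda>_. False) \<in> B"
  shows "tdual N (omega_lift \<omega> B) = omega_lift \<omega> (bin_dual N B)"
proof (intro equalityI subsetI)
  fix v
  assume v: "v \<in> tdual N (omega_lift \<omega> B)"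
  then obtain x y where xy: "x \<in> bvecs N" "y \<in> bvecs N" "v = f4_vec x y"
    by (auto simp: tdual_def elim: vecs_f4_vecE)
  have "even (overlap N c y) \<and> even (overlap N c x)" if "c \<in> B" for c
  proof -
    have "tip N (f4_vec c (\<lambda>_. False)) v = 0" "tip N (f4_vec (\<lambda>_. False) c) v = 0"
      using v that assms by (auto simp: tdual_def intro: f4_vec_in_omega_lift)
    then show ?thesis
      using of_nat_eq_0_iff_even_if_CHAR_2[OF CHAR_F4] by (simp add: xy tip_f4_vec)
  qed
  then show "v \<in> omega_lift \<omega> (bin_dual N B)"
    using xy by (auto simp: bin_dual_def intro: f4_vec_in_omega_lift)
next
  fix v
  assume "v \<in> omega_lift \<omega> (bin_dual N B)"
  then obtain x' y' where xy': "x' \<in> bin_dual N B" "y' \<in> bin_dual N B" "v = f4_vec x' y'"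
    by (elim omega_liftE)
  have "tip N u v = 0" if "u \<in> omega_lift \<omega> B" for u
    using that
  proof (rule omega_liftE)
    fix x y
    assume "x \<in> B" "y \<in> B" "u = f4_vec x y"
    moreover have "even (overlap N x y' + overlap N y x')"
      using xy' \<open>x \<in> B\<close> \<open>y \<in> B\<close> by (simp add: bin_dual_def)
    ultimately show "tip N u v = 0"
      using xy'(3) of_nat_eq_0_iff_even_if_CHAR_2[OF CHAR_F4] by (simp only: tip_f4_vec)
  qed
  moreover have "v \<in> vecs N"
    using xy' by (simp add: bin_dual_def f4_vec_in_vecs)
  ultimately show "v \<in> tdual N (omega_lift \<omega> B)"
    by (simp add: tdual_def)
qed

end

section \<open>Reed--Solomon codes\<close>

definition vec_poly :: "nat \<Rightarrow> (nat \<Rightarrow> 'a::comm_ring_1) \<Rightarrow> 'a poly" where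
  "vec_poly N c = (\<Sum>i<N. monom (c i) i)"

lemma coeff_vec_poly: "coeff (vec_poly N c) j = (if j < N then c j else 0)"
  by (simp add: vec_poly_def coeff_sum)

lemma poly_vec_poly: "poly (vec_poly N c) x = (\<Sum>i<N. c i * x ^ i)"
  by (simp add: vec_poly_def poly_sum poly_monom)

lemma degree_vec_poly_less: "0 < N \<Longrightarrow> degree (vec_poly N c) < N"
  using degree_le[of "N - 1" "vec_poly N c"] by (force simp: coeff_vec_poly)

lemma inj_on_vec_poly: "inj_on (vec_poly N :: _ \<Rightarrow> 'a::comm_ring_1 poly) (vecs N)"
proof (intro inj_onI ext)
  fix c c' :: "nat \<Rightarrow> 'a" and j
  assume "c \<in> vecs N" "c' \<in> vecs N" "vec_poly N c = vec_poly N c'"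
  then show "c j = c' j"
    using coeff_vec_poly[of N c j] coeff_vec_poly[of N c' j] by (cases "j < N") (auto simp: vecs_def)
qed

lemma vec_poly_vadd: "vec_poly N (vadd u v) = vec_poly N u + vec_poly N v"
  by (simp add: vec_poly_def vadd_def add_monom[symmetric] sum.distrib)

lemma vec_poly_smult: "vec_poly N (\<lambda>i. a * u i) = smult a (vec_poly N u)"
  unfolding vec_poly_def by (induction N) (simp_all add: smult_add_right smult_monom)

lemma vec_poly_zero [simp]: "vec_poly N (\<lambda>_. 0) = 0"
  by (simp add: vec_poly_def)

lemma prod_linear_factors_dvd:
  fixes p :: "'a::idom poly"
  assumes "finite T" "inj_on x T" "\<And>t. t \<in> T \<Longrightarrow> poly p (x t) = 0"
  shows "(\<Prod>t\<in>T. [:- x t, 1:]) dvd p"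
  using assms
proof (induction T arbitrary: p rule: finite_induct)
  case empty
  then show ?case
    by simp
next
  case (insert s T)
  then obtain q where q: "p = [:- x s, 1:] * q"
    by (meson insertI1 dvdE poly_eq_0_iff_dvd)
  have distinct: "x s \<noteq> x t" if "t \<in> T" for t
    using insert.prems(1) insert.hyps(2) that by (auto simp: inj_on_def)
  have "poly q (x t) = 0" if "t \<in> T" for t
  proof -
    have "poly p (x t) = poly [:- x s, 1:] (x t) * poly q (x t)"
      by (simp add: q algebra_simps)
    moreover have "poly [:- x s, 1:] (x t) \<noteq> 0"
      using distinct[OF that] by simp
    ultimately show ?thesis
      using insert.prems(2)[of t] that by simp
  qed
  then have "(\<Prod>t\<in>T. [:- x t, 1:]) dvd q"
    using insert.IH insert.prems(1) by simp
  then have "[:- x s, 1:] * (\<Prod>t\<in>T. [:- x t, 1:]) dvd [:- x s, 1:] * q"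
    by (rule mult_dvd_mono[OF dvd_refl])
  moreover have "(\<Prod>t\<in>insert s T. [:- x t, 1:]) = [:- x s, 1:] * (\<Prod>t\<in>T. [:- x t, 1:])"
    using insert.hyps by (rule prod.insert)
  ultimately show ?case
    using q by simp
qed

lemma degree_prod_linear_factors: "finite T \<Longrightarrow> degree (\<Prod>t\<in>T. [:- x t, 1::'a::idom:]) = card T"
  by (simp add: degree_prod_eq_sum_degree)

text \<open>A polynomial divisible by \<open>g\<close> is determined by its quotient, which has fewer than
  \<open>N - degree g\<close> coefficients.\<close>
lemma card_multiples_le:
  fixes g :: "'a::{field,finite} poly"
  assumes "g \<noteq> 0"
  shows "card {c \<in> vecs N. g dvd vec_poly N c} \<le> card (UNIV :: 'a set) ^ (N - degree g)"
proof -
  let ?S = "{c \<in> vecs N. g dvd vec_poly N c}"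
  let ?quot = "\<lambda>c. coeff (vec_poly N c div g)"
  have inj: "inj_on ?quot ?S"
  proof (rule inj_onI)
    fix c c'
    assume c: "c \<in> ?S" and c': "c' \<in> ?S" and "?quot c = ?quot c'"
    then have "vec_poly N c div g = vec_poly N c' div g"
      by (simp add: coeff_inject)
    then have "vec_poly N c = vec_poly N c'"
      using c c' by (metis (no_types, lifting) dvd_div_mult_self mem_Collect_eq)
    then show "c = c'"
      using inj_on_vec_poly c c' by (auto dest: inj_onD)
  qed
  moreover have image: "?quot ` ?S \<subseteq> vecs (N - degree g)"
  proof clarify
    fix c
    assume c: "c \<in> vecs N" "g dvd vec_poly N c"
    show "?quot c \<in> vecs (N - degree g)"
    proof (cases "vec_poly N c div g = 0")
      case False
      then have "vec_poly N c \<noteq> 0" "vec_poly N c = g * (vec_poly N c div g)"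
        using c(2) by auto
      then have "0 < N"
        by (cases N) (simp_all add: vec_poly_def)
      moreover have "degree (vec_poly N c) = degree g + degree (vec_poly N c div g)"
        using \<open>vec_poly N c = g * (vec_poly N c div g)\<close> assms False by (metis degree_mult_eq)
      ultimately have "degree g + degree (vec_poly N c div g) < N"
        using degree_vec_poly_less by metis
      then show ?thesis
        by (auto simp: vecs_def intro!: coeff_eq_0)
    qed (simp add: vecs_def)
  qed
  ultimately have "card ?S \<le> card (vecs (N - degree g) :: (nat \<Rightarrow> 'a) set)"
    using card_inj_on_le[OF inj image finite_vecs] by simp
  then show ?thesis
    by (simp add: card_vecs)
qed

lemma power_mod_period:
  assumes "a ^ d = (1 :: 'a::monoid_mult)"
  shows "a ^ s = a ^ (s mod d)"
proof -
  have "a ^ s = (a ^ d) ^ (s div d) * a ^ (s mod d)"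
    by (simp flip: power_mult power_add)
  then show ?thesis
    by (simp add: assms)
qed

text \<open>In \<open>GF(2)\<close> the element \<open>0\<close> satisfies \<^const>\<open>primitive_elem\<close>, since \<open>0 ^ 0 = 1\<close>.\<close>
lemma primitive_elem_nonzero:
  assumes "primitive_elem (\<alpha> :: 'f::{field,finite})" "2 < card (UNIV :: 'f set)"
  shows "\<alpha> \<noteq> 0"
proof
  assume "\<alpha> = 0"
  have "UNIV \<subseteq> {0, 1 :: 'f}"
  proof
    fix x :: 'f
    show "x \<in> {0, 1}"
    proof (cases "x = 0")
      case False
      then obtain i where "x = \<alpha> ^ i"
        using assms(1) by (auto simp: primitive_elem_def)
      with False \<open>\<alpha> = 0\<close> show ?thesis
        by (simp add: power_0_left split: if_splits)
    qed simp
  qed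
  then have "card (UNIV :: 'f set) \<le> card {0, 1 :: 'f}"
    by (intro card_mono) simp_all
  with assms(2) show False
    by simp
qed

locale primitive_root =
  fixes \<alpha> :: "'f::{field,finite}" and n :: nat
  assumes n_eq: "n = card (UNIV :: 'f set) - 1"
    and primitive: "primitive_elem \<alpha>"
    and alpha_nonzero: "\<alpha> \<noteq> 0"
begin

lemma card_nonzero: "card (UNIV - {0 :: 'f}) = n"
  by (simp add: n_eq card_Diff_singleton)

lemma n_pos: "0 < n"
proof -
  have "card {0, 1 :: 'f} \<le> card (UNIV :: 'f set)"
    by (rule card_mono) simp_all
  then show ?thesis
    by (simp add: n_eq)
qed

lemma ex_period: "\<exists>d. 0 < d \<and> d \<le> n \<and> \<alpha> ^ d = 1"
proof -
  have "\<not> inj_on (\<lambda>i. \<alpha> ^ i) {..n}"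
  proof
    assume "inj_on (\<lambda>i. \<alpha> ^ i) {..n}"
    moreover have "(\<lambda>i. \<alpha> ^ i) ` {..n} \<subseteq> UNIV - {0}"
      using alpha_nonzero by auto
    ultimately have "card {..n} \<le> card (UNIV - {0 :: 'f})"
      by (intro card_inj_on_le) simp_all
    then show False
      using card_nonzero by simp
  qed
  then obtain i' j' where "i' \<le> n" "j' \<le> n" "i' \<noteq> j'" "\<alpha> ^ i' = \<alpha> ^ j'"
    by (auto simp: inj_on_def)
  then obtain i j where "i < j" "j \<le> n" "\<alpha> ^ i = \<alpha> ^ j"
    by (metis linorder_neqE_nat)
  moreover have "\<alpha> ^ i * \<alpha> ^ (j - i) = \<alpha> ^ j"
    using \<open>i < j\<close> by (simp flip: power_add)
  ultimately have "\<alpha> ^ i * \<alpha> ^ (j - i) = \<alpha> ^ i * 1"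
    by simp
  then show ?thesis
    using \<open>i < j\<close> \<open>j \<le> n\<close> alpha_nonzero by (intro exI[of _ "j - i"]) simp
qed

lemma powers_eq_nonzero: "(\<lambda>i. \<alpha> ^ i) ` {..<n} = UNIV - {0}"
  and power_n_eq_1: "\<alpha> ^ n = 1"
proof -
  obtain d where d: "0 < d" "d \<le> n" "\<alpha> ^ d = 1"
    using ex_period by blast
  have powers_d: "UNIV - {0} \<subseteq> (\<lambda>i. \<alpha> ^ i) ` {..<d}"
  proof
    fix x :: 'f
    assume "x \<in> UNIV - {0}"
    then obtain i where "x = \<alpha> ^ i"
      using primitive by (auto simp: primitive_elem_def)
    then have "x = \<alpha> ^ (i mod d)" "i mod d < d"
      using d power_mod_period by auto
    then show "x \<in> (\<lambda>i. \<alpha> ^ i) ` {..<d}"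
      by blast
  qed
  have "n = card (UNIV - {0 :: 'f})"
    by (simp add: card_nonzero)
  also have "\<dots> \<le> card ((\<lambda>i. \<alpha> ^ i) ` {..<d})"
    by (rule card_mono) (simp_all add: powers_d)
  also have "\<dots> \<le> d"
    using card_image_le[of "{..<d}" "\<lambda>i. \<alpha> ^ i"] by simp
  finally have "d = n"
    using d by simp
  then show "\<alpha> ^ n = 1"
    using d by simp
  show "(\<lambda>i. \<alpha> ^ i) ` {..<n} = UNIV - {0}"
  proof
    show "(\<lambda>i. \<alpha> ^ i) ` {..<n} \<subseteq> UNIV - {0}"
      using alpha_nonzero by auto
    show "UNIV - {0} \<subseteq> (\<lambda>i. \<alpha> ^ i) ` {..<n}"
      using powers_d \<open>d = n\<close> by simp
  qed
qed

lemma inj_on_powers: "inj_on (\<lambda>i. \<alpha> ^ i) {..<n}"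
  by (rule eq_card_imp_inj_on) (simp_all add: powers_eq_nonzero card_nonzero)

lemma power_eq_1_iff: "\<alpha> ^ s = 1 \<longleftrightarrow> n dvd s"
proof
  assume "\<alpha> ^ s = 1"
  then have "\<alpha> ^ (s mod n) = \<alpha> ^ 0"
    using power_mod_period[OF power_n_eq_1] by simp
  then have "s mod n = 0"
    using inj_onD[OF inj_on_powers \<open>\<alpha> ^ (s mod n) = \<alpha> ^ 0\<close>] n_pos by simp
  then show "n dvd s"
    by presburger
next
  assume "n dvd s"
  then show "\<alpha> ^ s = 1"
    by (auto simp: power_mult power_n_eq_1)
qed

lemma sum_powers_eq_0:
  assumes "\<not> n dvd s"
  shows "(\<Sum>i<n. (\<alpha> ^ i) ^ s) = 0"
proof -
  have "(\<alpha> ^ s) ^ n = 1"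
    by (simp flip: power_mult add: mult.commute power_mult power_n_eq_1)
  moreover have "\<alpha> ^ s \<noteq> 1"
    using assms power_eq_1_iff by simp
  ultimately have "(\<Sum>i<n. (\<alpha> ^ s) ^ i) = 0"
    by (simp add: sum_gp_strict)
  then show ?thesis
    by (simp flip: power_mult add: mult.commute)
qed

end

lemma std_dual_subset_vecs: "std_dual n D \<subseteq> vecs n"
  by (auto simp: std_dual_def)

locale reed_solomon = primitive_root \<alpha> n for \<alpha> :: "'f::{field,finite}" and n +
  fixes k :: nat
  assumes k_less_n: "k < n"
begin

definition eval_vec :: "'f poly \<Rightarrow> nat \<Rightarrow> 'f" where
  "eval_vec f = (\<lambda>i. if i < n then poly f (\<alpha> ^ i) else 0)"

definition RS_eval_code :: "(nat \<Rightarrow> 'f) set" where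
  "RS_eval_code = (\<lambda>h. eval_vec (pCons 0 (vec_poly k h))) ` vecs k"

definition RS_dual_eval_code :: "(nat \<Rightarrow> 'f) set" where
  "RS_dual_eval_code = (\<lambda>h. eval_vec (vec_poly (n - k) h)) ` vecs (n - k)"

lemma eval_vec_in_vecs [simp]: "eval_vec f \<in> vecs n"
  by (simp add: eval_vec_def vecs_def)

lemma eval_vec_eqD:
  assumes "degree f < n" "degree g < n" "eval_vec f = eval_vec g"
  shows "f = g"
proof (rule poly_eqI_degree[of "(\<lambda>i. \<alpha> ^ i) ` {..<n}"])
  fix x
  assume "x \<in> (\<lambda>i. \<alpha> ^ i) ` {..<n}"
  then obtain i where "i < n" "x = \<alpha> ^ i"
    by blast
  then show "poly f x = poly g x"
    using fun_cong[OF assms(3), of i] by (simp add: eval_vec_def)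
qed (use assms inj_on_powers in \<open>simp_all add: card_image\<close>)

lemma eval_vec_shifted:
  "i < n \<Longrightarrow> eval_vec (pCons 0 (vec_poly k h)) i = (\<Sum>j<k. h j * (\<alpha> ^ i) ^ Suc j)"
  by (simp add: eval_vec_def poly_vec_poly sum_distrib_left mult_ac)

lemma eval_vec_vec_poly:
  "i < n \<Longrightarrow> eval_vec (vec_poly N h) i = (\<Sum>j<N. h j * (\<alpha> ^ i) ^ j)"
  by (simp add: eval_vec_def poly_vec_poly)

lemma sum_power_products_eq_0:
  assumes "finite J" "finite L" "\<And>j l. j \<in> J \<Longrightarrow> l \<in> L \<Longrightarrow> \<not> n dvd e j + e' l"
  shows "(\<Sum>i<n. (\<Sum>j\<in>J. a j * (\<alpha> ^ i) ^ e j) * (\<Sum>l\<in>L. b l * (\<alpha> ^ i) ^ e' l)) = 0"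
proof -
  have "(\<Sum>i<n. (\<Sum>j\<in>J. a j * (\<alpha> ^ i) ^ e j) * (\<Sum>l\<in>L. b l * (\<alpha> ^ i) ^ e' l))
      = (\<Sum>i<n. \<Sum>j\<in>J. \<Sum>l\<in>L. a j * b l * (\<alpha> ^ i) ^ (e j + e' l))"
    by (simp add: sum_product power_add mult_ac)
  also have "\<dots> = (\<Sum>j\<in>J. \<Sum>l\<in>L. \<Sum>i<n. a j * b l * (\<alpha> ^ i) ^ (e j + e' l))"
    by (simp only: sum.swap[of _ "{..<n}"])
  also have "\<dots> = (\<Sum>j\<in>J. \<Sum>l\<in>L. a j * b l * (\<Sum>i<n. (\<alpha> ^ i) ^ (e j + e' l)))"
    by (simp add: sum_distrib_left)
  also have "\<dots> = 0"
    using assms(3) by (simp add: sum_powers_eq_0)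
  finally show ?thesis .
qed

lemma degree_shifted_less: "degree (pCons 0 (vec_poly k h)) < n"
proof (cases "k = 0")
  case False
  then show ?thesis
    using k_less_n degree_vec_poly_less[of k h] degree_pCons_le[of 0 "vec_poly k h"] by linarith
qed (simp add: vec_poly_def n_pos)

lemma card_RS_eval_code: "card RS_eval_code = card (UNIV :: 'f set) ^ k"
proof -
  have "inj_on (\<lambda>h. eval_vec (pCons 0 (vec_poly k h))) (vecs k)"
  proof (rule inj_onI)
    fix h h'
    assume h: "h \<in> vecs k" "h' \<in> vecs k"
      and "eval_vec (pCons 0 (vec_poly k h)) = eval_vec (pCons 0 (vec_poly k h'))"
    then have "vec_poly k h = vec_poly k h'"
      using eval_vec_eqD[OF degree_shifted_less degree_shifted_less] by simp
    then show "h = h'"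
      using inj_onD[OF inj_on_vec_poly _ h] by simp
  qed
  then show ?thesis
    by (simp add: RS_eval_code_def card_image card_vecs)
qed

lemma card_RS_dual_eval_code: "card RS_dual_eval_code = card (UNIV :: 'f set) ^ (n - k)"
proof -
  have "inj_on (\<lambda>h. eval_vec (vec_poly (n - k) h)) (vecs (n - k))"
  proof (rule inj_onI)
    fix h h'
    assume h: "h \<in> vecs (n - k)" "h' \<in> vecs (n - k)"
      and "eval_vec (vec_poly (n - k) h) = eval_vec (vec_poly (n - k) h')"
    moreover have "degree (vec_poly (n - k) c) < n" for c :: "nat \<Rightarrow> 'f"
      using k_less_n degree_vec_poly_less[of "n - k" c] by simp
    ultimately have "vec_poly (n - k) h = vec_poly (n - k) h'"
      using eval_vec_eqD by simp
    then show "h = h'"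
      using inj_onD[OF inj_on_vec_poly _ h] by simp
  qed
  then show ?thesis
    by (simp add: RS_dual_eval_code_def card_image card_vecs)
qed

lemma RS_code_eq_multiples:
  "RS_code n k \<alpha> = {c \<in> vecs n. (\<Prod>i<n - k. [:- (\<alpha> ^ i), 1:]) dvd vec_poly n c}"
  by (simp add: RS_code_def cyclic_code_def vec_poly_def)

lemma RS_code_subset_vecs: "RS_code n k \<alpha> \<subseteq> vecs n"
  by (auto simp: RS_code_eq_multiples)

lemma zero_in_RS_code: "(\<lambda>_. 0) \<in> RS_code n k \<alpha>"
  by (simp add: RS_code_eq_multiples)

lemma vadd_in_RS_code: "u \<in> RS_code n k \<alpha> \<Longrightarrow> v \<in> RS_code n k \<alpha> \<Longrightarrow> vadd u v \<in> RS_code n k \<alpha>"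
  by (simp add: RS_code_eq_multiples vec_poly_vadd vadd_in_vecs)

lemma smult_in_RS_code: "u \<in> RS_code n k \<alpha> \<Longrightarrow> (\<lambda>i. a * u i) \<in> RS_code n k \<alpha>"
  by (auto simp: RS_code_eq_multiples vec_poly_smult vecs_def dvd_smult)

lemma RS_eval_code_subset: "RS_eval_code \<subseteq> RS_code n k \<alpha>"
proof
  fix u
  assume "u \<in> RS_eval_code"
  then obtain h where u: "u = eval_vec (pCons 0 (vec_poly k h))"
    by (auto simp: RS_eval_code_def)
  have "poly (vec_poly n u) (\<alpha> ^ t) = 0" if "t < n - k" for t
  proof -
    have "poly (vec_poly n u) (\<alpha> ^ t)
        = (\<Sum>i<n. (\<Sum>j<k. h j * (\<alpha> ^ i) ^ Suc j) * (\<Sum>l\<in>{t}. 1 * (\<alpha> ^ i) ^ l))"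
      by (simp add: poly_vec_poly u eval_vec_shifted flip: power_mult add: mult.commute)
    also have "\<dots> = 0"
      using that by (intro sum_power_products_eq_0) (auto dest: dvd_imp_le)
    finally show ?thesis .
  qed
  then have "(\<Prod>i<n - k. [:- (\<alpha> ^ i), 1:]) dvd vec_poly n u"
    by (intro prod_linear_factors_dvd inj_on_subset[OF inj_on_powers]) auto
  then show "u \<in> RS_code n k \<alpha>"
    by (simp add: RS_code_eq_multiples u)
qed

lemma RS_code_eq_eval: "RS_code n k \<alpha> = RS_eval_code"
proof -
  have "card (RS_code n k \<alpha>) \<le> card (UNIV :: 'f set) ^ (n - (n - k))"
    unfolding RS_code_eq_multiples
    using card_multiples_le[of "\<Prod>i<n - k. [:- (\<alpha> ^ i), 1:]" n]
    by (simp add: degree_prod_linear_factors)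
  then have "card (RS_code n k \<alpha>) \<le> card RS_eval_code"
    using k_less_n by (simp add: card_RS_eval_code)
  then show ?thesis
    using RS_eval_code_subset finite_subset[OF RS_code_subset_vecs finite_vecs]
    by (metis card_subset_eq card_mono antisym)
qed

lemma RS_dual_eval_code_subset: "RS_dual_eval_code \<subseteq> std_dual n (RS_code n k \<alpha>)"
proof
  fix v
  assume "v \<in> RS_dual_eval_code"
  then obtain h' where v: "v = eval_vec (vec_poly (n - k) h')"
    by (auto simp: RS_dual_eval_code_def)
  have "(\<Sum>i<n. u i * v i) = 0" if "u \<in> RS_code n k \<alpha>" for u
  proof -
    obtain h where u: "u = eval_vec (pCons 0 (vec_poly k h))"
      using \<open>u \<in> RS_code n k \<alpha>\<close> by (auto simp: RS_code_eq_eval RS_eval_code_def)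
    have "(\<Sum>i<n. u i * v i)
        = (\<Sum>i<n. (\<Sum>j<k. h j * (\<alpha> ^ i) ^ Suc j) * (\<Sum>l<n - k. h' l * (\<alpha> ^ i) ^ l))"
      by (simp add: u v eval_vec_shifted eval_vec_vec_poly)
    also have "\<dots> = 0"
      using k_less_n by (intro sum_power_products_eq_0) (auto dest: dvd_imp_le)
    finally show ?thesis .
  qed
  then show "v \<in> std_dual n (RS_code n k \<alpha>)"
    by (simp add: std_dual_def v)
qed

lemma std_dual_RS_subset_multiples:
  "std_dual n (RS_code n k \<alpha>) \<subseteq> {c \<in> vecs n. (\<Prod>t<k. [:- (\<alpha> ^ Suc t), 1:]) dvd vec_poly n c}"
proof clarify
  fix v
  assume v: "v \<in> std_dual n (RS_code n k \<alpha>)"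
  have "poly (vec_poly n v) (\<alpha> ^ Suc t) = 0" if "t < k" for t
  proof -
    \<comment> \<open>pairing with the evaluation vector of \<open>x\<^sup>t\<^sup>+\<^sup>1\<close> evaluates \<open>v\<close>'s polynomial at \<open>\<alpha>\<^sup>t\<^sup>+\<^sup>1\<close>\<close>
    let ?u = "eval_vec (pCons 0 (vec_poly k (\<lambda>j. of_bool (j = t))))"
    have "?u \<in> RS_code n k \<alpha>"
      using that by (auto simp: RS_code_eq_eval RS_eval_code_def vecs_def)
    moreover have "?u i = (\<alpha> ^ i) ^ Suc t" if "i < n" for i
      using \<open>t < k\<close> that by (simp add: eval_vec_shifted if_distrib cong: if_cong)
    ultimately have "(\<Sum>i<n. (\<alpha> ^ i) ^ Suc t * v i) = 0"
      using v by (auto simp: std_dual_def)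
    moreover have "poly (vec_poly n v) (\<alpha> ^ Suc t) = (\<Sum>i<n. (\<alpha> ^ i) ^ Suc t * v i)"
      unfolding poly_vec_poly by (rule sum.cong) (simp_all only: power_mult[symmetric] mult.commute)
    ultimately show ?thesis
      by simp
  qed
  moreover have "inj_on (\<lambda>t. \<alpha> ^ Suc t) {..<k}"
  proof (rule inj_onI)
    fix s t
    assume "s \<in> {..<k}" "t \<in> {..<k}" "\<alpha> ^ Suc s = \<alpha> ^ Suc t"
    then show "s = t"
      using inj_onD[OF inj_on_powers, of "Suc s" "Suc t"] k_less_n by simp
  qed
  ultimately have "(\<Prod>t<k. [:- (\<alpha> ^ Suc t), 1:]) dvd vec_poly n v"
    by (intro prod_linear_factors_dvd) auto
  then show "v \<in> vecs n \<and> (\<Prod>t<k. [:- (\<alpha> ^ Suc t), 1:]) dvd vec_poly n v"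
    using v std_dual_subset_vecs by blast
qed

lemma std_dual_RS_eq_eval: "std_dual n (RS_code n k \<alpha>) = RS_dual_eval_code"
proof -
  have "card (std_dual n (RS_code n k \<alpha>))
      \<le> card {c \<in> vecs n. (\<Prod>t<k. [:- (\<alpha> ^ Suc t), 1:]) dvd vec_poly n c}"
    by (rule card_mono[OF _ std_dual_RS_subset_multiples]) simp
  also have "\<dots> \<le> card (UNIV :: 'f set) ^ (n - k)"
    using card_multiples_le[of "\<Prod>t<k. [:- (\<alpha> ^ Suc t), 1:]" n]
    by (simp add: degree_prod_linear_factors)
  finally have "card (std_dual n (RS_code n k \<alpha>)) \<le> card RS_dual_eval_code"
    by (simp add: card_RS_dual_eval_code)
  then show ?thesis
    using RS_dual_eval_code_subset finite_subset[OF std_dual_subset_vecs finite_vecs]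
    by (metis card_subset_eq card_mono antisym)
qed

lemma card_RS_code: "card (RS_code n k \<alpha>) = card (UNIV :: 'f set) ^ k"
  by (simp add: RS_code_eq_eval card_RS_eval_code)

lemma card_std_dual_RS: "card (std_dual n (RS_code n k \<alpha>)) = card (UNIV :: 'f set) ^ (n - k)"
  by (simp add: std_dual_RS_eq_eval card_RS_dual_eval_code)

lemma RS_code_subset_std_dual:
  assumes "2 * k < n"
  shows "RS_code n k \<alpha> \<subseteq> std_dual n (RS_code n k \<alpha>)"
proof
  fix v
  assume "v \<in> RS_code n k \<alpha>"
  then obtain h' where v: "v = eval_vec (pCons 0 (vec_poly k h'))"
    by (auto simp: RS_code_eq_eval RS_eval_code_def)
  have "(\<Sum>i<n. u i * v i) = 0" if "u \<in> RS_code n k \<alpha>" for u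
  proof -
    obtain h where u: "u = eval_vec (pCons 0 (vec_poly k h))"
      using \<open>u \<in> RS_code n k \<alpha>\<close> by (auto simp: RS_code_eq_eval RS_eval_code_def)
    have "(\<Sum>i<n. u i * v i)
        = (\<Sum>i<n. (\<Sum>j<k. h j * (\<alpha> ^ i) ^ Suc j) * (\<Sum>l<k. h' l * (\<alpha> ^ i) ^ Suc l))"
      by (simp add: u v eval_vec_shifted)
    also have "\<dots> = 0"
      using assms by (intro sum_power_products_eq_0) (auto dest: dvd_imp_le)
    finally show ?thesis .
  qed
  then show "v \<in> std_dual n (RS_code n k \<alpha>)"
    by (simp add: std_dual_def v)
qed

text \<open>A nonzero dual codeword evaluates a nonzero polynomial of degree below \<open>n - k\<close>,
  so it vanishes at fewer than \<open>n - k\<close> of the \<open>n\<close> distinct points \<open>\<alpha>\<^sup>i\<close>.\<close>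
lemma weight_std_dual_RS:
  assumes "v \<in> std_dual n (RS_code n k \<alpha>)" "v \<noteq> (\<lambda>_. 0)"
  shows "k + 1 \<le> weight n v"
proof -
  obtain h where v: "v = eval_vec (vec_poly (n - k) h)"
    using assms(1) by (auto simp: std_dual_RS_eq_eval RS_dual_eval_code_def)
  let ?f = "vec_poly (n - k) h" and ?Z = "{i. i < n \<and> v i = 0}"
  have "?f \<noteq> 0"
    using assms(2) v by (auto simp: eval_vec_def)
  have "(\<lambda>i. \<alpha> ^ i) ` ?Z \<subseteq> {x. poly ?f x = 0}"
    by (auto simp: v eval_vec_def)
  then have "card ((\<lambda>i. \<alpha> ^ i) ` ?Z) \<le> degree ?f"
    using card_mono[OF poly_roots_finite[OF \<open>?f \<noteq> 0\<close>]] card_poly_roots_bound[OF \<open>?f \<noteq> 0\<close>]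
    by (meson order_trans)
  moreover have "card ((\<lambda>i. \<alpha> ^ i) ` ?Z) = card ?Z"
    by (rule card_image, rule inj_on_subset[OF inj_on_powers]) auto
  moreover have "degree ?f < n - k"
    using k_less_n by (simp add: degree_vec_poly_less)
  moreover have "weight n v = n - card ?Z"
  proof -
    have "{i. i < n \<and> v i \<noteq> 0} = {..<n} - ?Z"
      by auto
    then show ?thesis
      by (simp add: weight_def card_Diff_subset subset_eq)
  qed
  ultimately show ?thesis
    by linarith
qed

end

section \<open>Binary expansion in a self-dual basis\<close>

locale self_dual_expansion =
  fixes m :: nat and b :: "nat \<Rightarrow> 'f::{field,finite}"
  assumes card_field: "card (UNIV :: 'f set) = 2 ^ m"
    and self_dual: "self_dual_basis m b"
begin

lemma CHAR_field: "CHAR('f) = 2"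
  using card_field by (rule CHAR_eq_2_if_card_power_2)

lemma m_pos: "0 < m"
proof -
  have "card {0, 1 :: 'f} \<le> card (UNIV :: 'f set)"
    by (rule card_mono) simp_all
  then show ?thesis
    by (cases m) (simp_all add: card_field)
qed

definition basis_comb :: "(nat \<Rightarrow> bool) \<Rightarrow> 'f" where
  "basis_comb d = (\<Sum>j<m. of_bool (d j) * b j)"

lemma bij_basis_comb: "bij_betw basis_comb (bvecs m) UNIV"
  using self_dual unfolding self_dual_basis_def basis_comb_def bvecs_def by blast

lemma trace2_basis: "i < m \<Longrightarrow> j < m \<Longrightarrow> trace2 m (b i * b j) = (if i = j then 1 else 0)"
  using self_dual by (simp add: self_dual_basis_def)

lemma trace2_zero [simp]: "trace2 m (0 :: 'f) = 0"
  by (simp add: trace2_def power_0_left)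

lemma trace2_add: "trace2 m (x + y :: 'f) = trace2 m x + trace2 m y"
  by (simp add: trace2_def power_2_power_add_if_CHAR_2[OF CHAR_field] sum.distrib)

lemma trace2_sum: "trace2 m (\<Sum>x\<in>A. f x :: 'f) = (\<Sum>x\<in>A. trace2 m (f x))"
  by (induction A rule: infinite_finite_induct) (simp_all add: trace2_add)

lemma trace2_of_bool_mult: "trace2 m (of_bool a * x :: 'f) = of_bool a * trace2 m x"
  by (cases a) simp_all

definition bits_vec :: "(nat \<Rightarrow> bool) \<Rightarrow> nat \<Rightarrow> 'f" where
  "bits_vec c = (\<lambda>i. \<Sum>j<m. of_bool (c (i * m + j)) * b j)"

lemma bin_exp_eq: "bin_exp n m b D = {c \<in> bvecs (n * m). bits_vec c \<in> D}"
  by (auto simp: bin_exp_def bvecs_def bits_vec_def)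

lemma bits_vec_eq_basis_comb: "bits_vec c i = basis_comb (\<lambda>j. j < m \<and> c (i * m + j))"
  by (simp add: bits_vec_def basis_comb_def)

lemma trace2_bits_vec_mult_basis:
  assumes "l < m"
  shows "trace2 m (bits_vec c i * b l) = of_bool (c (i * m + l))"
proof -
  have "trace2 m (bits_vec c i * b l) = (\<Sum>j<m. of_bool (c (i * m + j)) * trace2 m (b j * b l))"
    by (simp add: bits_vec_def sum_distrib_right mult.assoc trace2_sum trace2_of_bool_mult)
  also have "\<dots> = (\<Sum>j<m. if j = l then of_bool (c (i * m + j)) else 0)"
    using assms by (intro sum.cong) (simp_all add: trace2_basis)
  also have "\<dots> = of_bool (c (i * m + l))"
    using assms by simp
  finally show ?thesis .
qed

lemma of_nat_overlap_eq_trace2: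
  "of_nat (overlap (n * m) c c') = trace2 m (\<Sum>i<n. bits_vec c i * bits_vec c' i)"
proof -
  have "trace2 m (\<Sum>i<n. bits_vec c i * bits_vec c' i)
      = (\<Sum>i<n. \<Sum>l<m. of_bool (c' (i * m + l)) * trace2 m (bits_vec c i * b l))"
    by (simp add: bits_vec_def[of c'] sum_distrib_left trace2_sum trace2_of_bool_mult mult_ac)
  also have "\<dots> = (\<Sum>i<n. \<Sum>l<m. of_bool (c (i * m + l) \<and> c' (i * m + l)))"
    by (intro sum.cong) (auto simp: trace2_bits_vec_mult_basis)
  also have "\<dots> = of_nat (overlap (n * m) c c')"
    by (simp add: overlap_eq_sum sum_lessThan_mult)
  finally show ?thesis
    by simp
qed

lemma bits_vec_in_vecs: "c \<in> bvecs (n * m) \<Longrightarrow> bits_vec c \<in> vecs n"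
proof -
  assume c: "c \<in> bvecs (n * m)"
  have "\<not> c (i * m + j)" if "n \<le> i" for i j
  proof -
    have "n * m \<le> i * m + j"
      using that by (meson le_add1 mult_le_mono1 order_trans)
    then show ?thesis
      using c by (simp add: bvecs_def)
  qed
  then show ?thesis
    by (simp add: vecs_def bits_vec_def)
qed

lemma inj_on_bits_vec: "inj_on bits_vec (bvecs (n * m))"
proof (intro inj_onI ext)
  fix c c' p
  assume c: "c \<in> bvecs (n * m)" "c' \<in> bvecs (n * m)" and eq: "bits_vec c = bits_vec c'"
  show "c p = c' p"
  proof (cases "p < n * m")
    case True
    let ?i = "p div m"
    have "basis_comb (\<lambda>j. j < m \<and> c (?i * m + j)) = basis_comb (\<lambda>j. j < m \<and> c' (?i * m + j))"
      using eq by (metis bits_vec_eq_basis_comb)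
    then have blocks: "(\<lambda>j. j < m \<and> c (?i * m + j)) = (\<lambda>j. j < m \<and> c' (?i * m + j))"
      by (rule inj_onD[OF bij_betw_imp_inj_on[OF bij_basis_comb]]) (simp_all add: bvecs_def)
    have "p mod m < m"
      using m_pos by simp
    then show ?thesis
      using fun_cong[OF blocks, of "p mod m"] by simp
  next
    case False
    then show ?thesis
      using c by (simp add: bvecs_def)
  qed
qed

lemma bits_vec_surj:
  assumes "u \<in> vecs n"
  obtains c where "c \<in> bvecs (n * m)" "bits_vec c = u"
proof
  define d where "d i = inv_into (bvecs m) basis_comb (u i)" for i
  have surj: "u i \<in> basis_comb ` bvecs m" for i
    using bij_basis_comb by (simp add: bij_betw_def)
  have d: "d i \<in> bvecs m" "basis_comb (d i) = u i" for i
    unfolding d_def using surj by (rule inv_into_into, rule f_inv_into_f)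
  define c where "c p \<longleftrightarrow> p < n * m \<and> d (p div m) (p mod m)" for p
  show c_bvecs: "c \<in> bvecs (n * m)"
    by (simp add: c_def bvecs_def)
  show "bits_vec c = u"
  proof
    fix i
    show "bits_vec c i = u i"
    proof (cases "i < n")
      case True
      have "(\<lambda>j. j < m \<and> c (i * m + j)) = d i"
      proof
        fix j
        show "(j < m \<and> c (i * m + j)) = d i j"
        proof (cases "j < m")
          case True
          then have "(i * m + j) div m = i" "(i * m + j) mod m = j"
            by simp_all
          then show ?thesis
            using True block_index_less[OF \<open>i < n\<close> True] by (simp add: c_def)
        next
          case False
          then show ?thesis
            using d(1)[of i] by (simp add: bvecs_def)
        qed
      qed
      then show ?thesis
        using d(2) by (simp add: bits_vec_eq_basis_comb)
    next
      case False
      then show ?thesis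
        using bits_vec_in_vecs[OF c_bvecs] assms by (simp add: vecs_def)
    qed
  qed
qed

lemma bits_vec_nonzeroD:
  assumes "bits_vec c i \<noteq> 0"
  shows "\<exists>j<m. c (i * m + j)"
proof (rule ccontr)
  assume "\<not> (\<exists>j<m. c (i * m + j))"
  then have "bits_vec c i = 0"
    unfolding bits_vec_def by (intro sum.neutral) simp
  with assms show False
    by contradiction
qed

lemma bits_vec_False [simp]: "bits_vec (\<lambda>_. False) = (\<lambda>_. 0)"
  by (simp add: bits_vec_def fun_eq_iff)

lemma card_bin_exp: "D \<subseteq> vecs n \<Longrightarrow> card (bin_exp n m b D) = card D"
proof -
  assume D: "D \<subseteq> vecs n"
  have "bits_vec ` {c \<in> bvecs (n * m). bits_vec c \<in> D} = D"
  proof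
    show "D \<subseteq> bits_vec ` {c \<in> bvecs (n * m). bits_vec c \<in> D}"
    proof
      fix u
      assume "u \<in> D"
      then obtain c where "c \<in> bvecs (n * m)" "bits_vec c = u"
        using D bits_vec_surj by blast
      with \<open>u \<in> D\<close> show "u \<in> bits_vec ` {c \<in> bvecs (n * m). bits_vec c \<in> D}"
        by blast
    qed
  qed blast
  moreover have "inj_on bits_vec {c \<in> bvecs (n * m). bits_vec c \<in> D}"
    by (rule inj_on_subset[OF inj_on_bits_vec]) blast
  ultimately show ?thesis
    by (metis bin_exp_eq card_image)
qed

lemma finite_bin_exp: "D \<subseteq> vecs n \<Longrightarrow> finite (bin_exp n m b D)"
proof -
  assume D: "D \<subseteq> vecs n"
  have "bits_vec ` bin_exp n m b D \<subseteq> D"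
    by (auto simp: bin_exp_eq)
  then have "finite (bits_vec ` bin_exp n m b D)"
    using finite_subset[OF D finite_vecs] by (rule finite_subset)
  moreover have "inj_on bits_vec (bin_exp n m b D)"
    by (rule inj_on_subset[OF inj_on_bits_vec]) (auto simp: bin_exp_eq)
  ultimately show ?thesis
    by (rule finite_imageD)
qed

lemma bin_exp_mono: "D \<subseteq> D' \<Longrightarrow> bin_exp n m b D \<subseteq> bin_exp n m b D'"
  by (auto simp: bin_exp_eq)

lemma bin_exp_subset_bvecs: "bin_exp n m b D \<subseteq> bvecs (n * m)"
  by (auto simp: bin_exp_eq)

lemma False_in_bin_exp: "(\<lambda>_. 0) \<in> D \<Longrightarrow> (\<lambda>_. False) \<in> bin_exp n m b D"
  by (simp add: bin_exp_eq bvecs_def bits_vec_def)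

lemma xor_in_bin_exp:
  assumes "\<And>u v. u \<in> D \<Longrightarrow> v \<in> D \<Longrightarrow> vadd u v \<in> D"
    and "c \<in> bin_exp n m b D" "c' \<in> bin_exp n m b D"
  shows "(\<lambda>p. c p \<noteq> c' p) \<in> bin_exp n m b D"
proof -
  have "of_bool (x \<noteq> y) = (of_bool x + of_bool y :: 'f)" for x y
    using add_self_eq_0_if_CHAR_2[OF CHAR_field, of 1] by (cases x; cases y) simp_all
  then have "bits_vec (\<lambda>p. c p \<noteq> c' p) = vadd (bits_vec c) (bits_vec c')"
    by (simp add: bits_vec_def vadd_def distrib_right sum.distrib)
  then show ?thesis
    using assms by (auto simp: bin_exp_eq bvecs_def)
qed

lemma even_overlap_bin_exp_std_dual:
  assumes "c \<in> bin_exp n m b D" "c' \<in> bin_exp n m b (std_dual n D)"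
  shows "even (overlap (n * m) c c')"
proof -
  have "(\<Sum>i<n. bits_vec c i * bits_vec c' i) = 0"
    using assms by (auto simp: bin_exp_eq std_dual_def)
  then have "(of_nat (overlap (n * m) c c') :: 'f) = 0"
    by (simp add: of_nat_overlap_eq_trace2)
  then show ?thesis
    using of_nat_eq_0_iff_even_if_CHAR_2[OF CHAR_field] by blast
qed

lemma bits_vec_in_std_dual:
  assumes "D \<subseteq> vecs n" and smult_closed: "\<And>u a. u \<in> D \<Longrightarrow> (\<lambda>i. a * u i) \<in> D"
    and c': "c' \<in> bvecs (n * m)"
    and even: "\<And>c. c \<in> bin_exp n m b D \<Longrightarrow> even (overlap (n * m) c c')"
  shows "bits_vec c' \<in> std_dual n D"
proof -
  have "(\<Sum>i<n. u i * bits_vec c' i) = 0" if "u \<in> D" for u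
  proof (rule ccontr)
    define s where "s = (\<Sum>i<n. u i * bits_vec c' i)"
    assume "(\<Sum>i<n. u i * bits_vec c' i) \<noteq> 0"
    then have "s \<noteq> 0"
      by (simp add: s_def)
    \<comment> \<open>rescale \<open>u\<close> so that the inner product becomes \<open>b\<^sub>0\<^sup>2\<close>, whose trace is \<open>1\<close>\<close>
    define a where "a = b 0 * b 0 / s"
    have "(\<lambda>i. a * u i) \<in> vecs n"
      using smult_closed[OF that] assms(1) by blast
    then obtain c where c: "c \<in> bvecs (n * m)" "bits_vec c = (\<lambda>i. a * u i)"
      by (rule bits_vec_surj)
    then have "c \<in> bin_exp n m b D"
      using smult_closed[OF that] by (simp add: bin_exp_eq)
    have "(of_nat (overlap (n * m) c c') :: 'f) = trace2 m (a * s)"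
      by (simp add: of_nat_overlap_eq_trace2 c(2) s_def sum_distrib_left mult.assoc)
    also have "\<dots> = 1"
      using \<open>s \<noteq> 0\<close> m_pos by (simp add: a_def trace2_basis)
    finally have "(of_nat (overlap (n * m) c c') :: 'f) = 1" .
    moreover have "(of_nat (overlap (n * m) c c') :: 'f) = 0"
      using even[OF \<open>c \<in> bin_exp n m b D\<close>] of_nat_eq_0_iff_even_if_CHAR_2[OF CHAR_field] by blast
    ultimately show False
      by simp
  qed
  then show ?thesis
    using bits_vec_in_vecs[OF c'] by (simp add: std_dual_def)
qed

lemma bin_exp_std_dual:
  assumes "D \<subseteq> vecs n" "\<And>u a. u \<in> D \<Longrightarrow> (\<lambda>i. a * u i) \<in> D"
  shows "bin_exp n m b (std_dual n D) = bin_dual (n * m) (bin_exp n m b D)"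
proof (intro equalityI subsetI)
  fix c'
  assume c': "c' \<in> bin_exp n m b (std_dual n D)"
  then show "c' \<in> bin_dual (n * m) (bin_exp n m b D)"
    using bin_exp_subset_bvecs even_overlap_bin_exp_std_dual[OF _ c'] by (auto simp: bin_dual_def)
next
  fix c'
  assume "c' \<in> bin_dual (n * m) (bin_exp n m b D)"
  then have "c' \<in> bvecs (n * m)" "\<And>c. c \<in> bin_exp n m b D \<Longrightarrow> even (overlap (n * m) c c')"
    by (auto simp: bin_dual_def)
  then show "c' \<in> bin_exp n m b (std_dual n D)"
    using bits_vec_in_std_dual[OF assms] by (simp add: bin_exp_eq)
qed

end

section \<open>Concatenation with the inner code\<close>

locale concatenation =
  fixes n2 m d2 :: nat and C2 :: "(nat \<Rightarrow> 'q::{field,finite}) set"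
    and \<rho> :: "(nat \<Rightarrow> 'q) \<Rightarrow> (nat \<Rightarrow> 'q) set"
  assumes CHAR_q: "CHAR('q) = 2"
    and inner: "stabilizer_code n2 m d2 C2"
    and rho_bij: "bij_betw \<rho> (vecs m) (cosets_quot n2 C2)"
    and rho_add: "\<forall>u\<in>vecs m. \<forall>v\<in>vecs m. \<rho> (vadd u v) = coset_add (\<rho> u) (\<rho> v)"
    and rho_form: "\<forall>u\<in>vecs m. \<forall>v\<in>vecs m. \<forall>x\<in>\<rho> u. \<forall>y\<in>\<rho> v. tip n2 x y = tip m u v"
begin

lemma C2_additive: "additive n2 C2"
  and C2_self_orthogonal: "C2 \<subseteq> tdual n2 C2"
  and m_le_n2: "m \<le> n2"
  and card_C2: "card C2 = 2 ^ (n2 - m)"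
  and weight_C2: "\<And>v. v \<in> tdual n2 C2 - C2 \<Longrightarrow> d2 \<le> weight n2 v"
  using inner by (auto simp: stabilizer_code_def self_orthogonal_def)

lemma zero_in_C2: "(\<lambda>_. 0) \<in> C2"
  and vadd_in_C2: "x \<in> C2 \<Longrightarrow> y \<in> C2 \<Longrightarrow> vadd x y \<in> C2"
  and C2_subset_vecs: "C2 \<subseteq> vecs n2"
  using C2_additive by (auto simp: additive_def)

lemma vadd_in_tdual: "x \<in> tdual N C \<Longrightarrow> y \<in> tdual N C \<Longrightarrow> vadd x y \<in> tdual N (C :: (nat \<Rightarrow> 'q) set)"
  by (simp add: tdual_def tip_vadd_right[OF CHAR_q] vadd_in_vecs)

definition coset :: "(nat \<Rightarrow> 'q) \<Rightarrow> (nat \<Rightarrow> 'q) set" where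
  "coset v = vadd v ` C2"

lemma self_in_coset: "v \<in> coset v"
  using zero_in_C2 by (force simp: coset_def)

lemma vadd_image_C2: "c \<in> C2 \<Longrightarrow> vadd c ` C2 = C2"
proof
  assume c: "c \<in> C2"
  then show "vadd c ` C2 \<subseteq> C2"
    using vadd_in_C2 by blast
  have "c' = vadd c (vadd c c')" for c'
    by (simp flip: vadd_assoc add: vadd_self_if_CHAR_2[OF CHAR_q])
  then show "C2 \<subseteq> vadd c ` C2"
    using c vadd_in_C2 by blast
qed

lemma coset_eq: "x \<in> coset v \<Longrightarrow> coset x = coset v"
proof -
  assume "x \<in> coset v"
  then obtain c where c: "c \<in> C2" "x = vadd v c"
    by (auto simp: coset_def)
  then have "coset x = vadd v ` vadd c ` C2"
    by (simp add: coset_def image_image vadd_assoc)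
  then show ?thesis
    by (simp add: vadd_image_C2 c(1) coset_def)
qed

lemma coset_subset_tdual: "v \<in> tdual n2 C2 \<Longrightarrow> coset v \<subseteq> tdual n2 C2"
  using C2_self_orthogonal vadd_in_tdual by (auto simp: coset_def)

lemma card_coset: "card (coset v) = card C2"
  unfolding coset_def by (rule card_image) (simp add: inj_on_def vadd_def fun_eq_iff)

lemma coset_of_C2: "c \<in> C2 \<Longrightarrow> coset c = C2"
  by (simp add: coset_def vadd_image_C2)

lemma rho_coset:
  assumes "u \<in> vecs m"
  obtains v where "v \<in> tdual n2 C2" "\<rho> u = coset v"
proof -
  have "\<rho> u \<in> cosets_quot n2 C2"
    using bij_betw_apply[OF rho_bij assms] .
  then show ?thesis
    using that by (auto simp: cosets_quot_def coset_def)
qed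

lemma rho_eq_coset: "u \<in> vecs m \<Longrightarrow> x \<in> \<rho> u \<Longrightarrow> \<rho> u = coset x"
  by (metis rho_coset coset_eq)

lemma rho_nonempty: "u \<in> vecs m \<Longrightarrow> \<exists>x. x \<in> \<rho> u"
  by (metis rho_coset self_in_coset)

lemma rho_subset_tdual: "u \<in> vecs m \<Longrightarrow> \<rho> u \<subseteq> tdual n2 C2"
  by (metis rho_coset coset_subset_tdual)

lemma rho_subset_vecs: "u \<in> vecs m \<Longrightarrow> \<rho> u \<subseteq> vecs n2"
  using rho_subset_tdual by (auto simp: tdual_def)

lemma card_rho: "u \<in> vecs m \<Longrightarrow> card (\<rho> u) = card C2"
  by (metis rho_coset card_coset)

lemma vadd_in_rho:
  "u \<in> vecs m \<Longrightarrow> v \<in> vecs m \<Longrightarrow> x \<in> \<rho> u \<Longrightarrow> y \<in> \<rho> v \<Longrightarrow> vadd x y \<in> \<rho> (vadd u v)"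
  using rho_add by (auto simp: coset_add_def)

lemma rho_unique:
  assumes "u \<in> vecs m" "u' \<in> vecs m" "x \<in> \<rho> u" "x \<in> \<rho> u'"
  shows "u = u'"
proof -
  have "\<rho> u = \<rho> u'"
    using rho_eq_coset[OF assms(1,3)] rho_eq_coset[OF assms(2,4)] by simp
  then show ?thesis
    using inj_onD[OF bij_betw_imp_inj_on[OF rho_bij]] assms(1,2) by blast
qed

text \<open>Additivity forces \<open>\<rho> 0\<close> to be the trivial coset: it contains \<open>x + x = 0\<close> for each
  of its elements \<open>x\<close>.\<close>
lemma rho_zero: "\<rho> (\<lambda>_. 0) = C2"
proof -
  obtain x where x: "x \<in> \<rho> (\<lambda>_. 0)"
    using rho_nonempty[OF zero_in_vecs] by blast
  then have "vadd x x \<in> \<rho> (\<lambda>_. 0)"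
    using vadd_in_rho[of "\<lambda>_. 0" "\<lambda>_. 0"] by simp
  then have "(\<lambda>_. 0) \<in> coset x"
    using rho_eq_coset[OF _ x] by (simp add: vadd_self_if_CHAR_2[OF CHAR_q])
  then obtain c where "c \<in> C2" "vadd x c = (\<lambda>_. 0)"
    by (auto simp: coset_def)
  then have "x = c"
    by (simp add: vadd_eq_0_iff_if_CHAR_2[OF CHAR_q])
  then show ?thesis
    using rho_eq_coset[OF _ x] coset_of_C2 \<open>c \<in> C2\<close> by simp
qed

lemma rho_cover: "x \<in> tdual n2 C2 \<Longrightarrow> \<exists>u\<in>vecs m. x \<in> \<rho> u"
proof -
  assume "x \<in> tdual n2 C2"
  then have "coset x \<in> \<rho> ` vecs m"
    using rho_bij unfolding bij_betw_def cosets_quot_def coset_def by blast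
  then show ?thesis
    using self_in_coset by auto
qed

lemma weight_rho: "u \<in> vecs m \<Longrightarrow> u \<noteq> (\<lambda>_. 0) \<Longrightarrow> x \<in> \<rho> u \<Longrightarrow> d2 \<le> weight n2 x"
proof -
  assume u: "u \<in> vecs m" "u \<noteq> (\<lambda>_. 0)" and x: "x \<in> \<rho> u"
  have "x \<notin> C2"
    using rho_unique[OF u(1) _ x] u(2) rho_zero by auto
  then show ?thesis
    using weight_C2 rho_subset_tdual[OF u(1)] x by blast
qed

definition concat_fibre :: "nat \<Rightarrow> (nat \<Rightarrow> 'q) \<Rightarrow> (nat \<Rightarrow> 'q) set" where
  "concat_fibre n v = {w \<in> vecs (n * n2). \<forall>i<n. block n2 i w \<in> \<rho> (block m i v)}"

lemma rho_code_eq_UN: "rho_code n m n2 \<rho> D = (\<Union>v\<in>D. concat_fibre n v)"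
  by (auto simp: rho_code_def concat_fibre_def)

lemma concat_fibre_subset_vecs: "concat_fibre n v \<subseteq> vecs (n * n2)"
  by (auto simp: concat_fibre_def)

lemma concat_blocks_in_concat_fibre:
  assumes "\<And>i. i < n \<Longrightarrow> f i \<in> \<rho> (block m i v)"
  shows "concat_blocks n2 n f \<in> concat_fibre n v"
proof -
  have "block n2 i (concat_blocks n2 n f) = f i" if "i < n" for i
    using that assms[OF that] rho_subset_vecs[OF block_in_vecs] by (blast intro: block_concat_blocks)
  then show ?thesis
    using assms by (simp add: concat_fibre_def)
qed

lemma concat_fibre_nonempty: "\<exists>w. w \<in> concat_fibre n v"
proof -
  have "\<forall>i. \<exists>x. x \<in> \<rho> (block m i v)"
    using rho_nonempty[OF block_in_vecs] by blast
  then have "\<exists>f. \<forall>i. f i \<in> \<rho> (block m i v)"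
    by (rule choice)
  then show ?thesis
    using concat_blocks_in_concat_fibre by blast
qed

lemma bij_betw_concat_fibre_PiE:
  "bij_betw (\<lambda>w. restrict (\<lambda>i. block n2 i w) {..<n}) (concat_fibre n v) (\<Pi>\<^sub>E i\<in>{..<n}. \<rho> (block m i v))"
proof (rule bij_betw_byWitness[where f' = "concat_blocks n2 n"])
  show "\<forall>w\<in>concat_fibre n v. concat_blocks n2 n (restrict (\<lambda>i. block n2 i w) {..<n}) = w"
  proof
    fix w
    assume "w \<in> concat_fibre n v"
    then show "concat_blocks n2 n (restrict (\<lambda>i. block n2 i w) {..<n}) = w"
      by (intro vecs_eqI_blocks[OF concat_blocks_in_vecs])
        (simp_all add: concat_fibre_def block_concat_blocks)
  qed
  show "\<forall>f\<in>\<Pi>\<^sub>E i\<in>{..<n}. \<rho> (block m i v). restrict (\<lambda>i. block n2 i (concat_blocks n2 n f)) {..<n} = f"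
  proof (intro ballI, rule ext)
    fix f i
    assume f: "f \<in> (\<Pi>\<^sub>E i\<in>{..<n}. \<rho> (block m i v))"
    show "restrict (\<lambda>i. block n2 i (concat_blocks n2 n f)) {..<n} i = f i"
    proof (cases "i < n")
      case True
      then have "f i \<in> \<rho> (block m i v)"
        using PiE_mem[OF f] by simp
      then have "f i \<in> vecs n2"
        using rho_subset_vecs[OF block_in_vecs] by blast
      then show ?thesis
        using True by (simp add: block_concat_blocks)
    next
      case False
      then show ?thesis
        using PiE_arb[OF f, of i] by simp
    qed
  qed
  show "(\<lambda>w. restrict (\<lambda>i. block n2 i w) {..<n}) ` concat_fibre n v \<subseteq> (\<Pi>\<^sub>E i\<in>{..<n}. \<rho> (block m i v))"
    by (rule image_subsetI) (simp add: concat_fibre_def)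
  show "concat_blocks n2 n ` (\<Pi>\<^sub>E i\<in>{..<n}. \<rho> (block m i v)) \<subseteq> concat_fibre n v"
    by (auto intro: concat_blocks_in_concat_fibre)
qed

lemma card_concat_fibre: "card (concat_fibre n v) = card C2 ^ n"
  using bij_betw_same_card[OF bij_betw_concat_fibre_PiE] by (simp add: card_PiE card_rho)

lemma concat_fibres_disjoint:
  assumes "v \<in> vecs (n * m)" "v' \<in> vecs (n * m)" "w \<in> concat_fibre n v" "w \<in> concat_fibre n v'"
  shows "v = v'"
proof (rule vecs_eqI_blocks[OF assms(1,2)])
  fix i
  assume "i < n"
  then show "block m i v = block m i v'"
    using assms(3,4) rho_unique[OF block_in_vecs block_in_vecs] by (auto simp: concat_fibre_def)
qed

lemma card_rho_code:
  assumes "D \<subseteq> vecs (n * m)"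
  shows "card (rho_code n m n2 \<rho> D) = card D * card C2 ^ n"
proof -
  have "finite D"
    using finite_subset[OF assms finite_vecs] .
  then have "card (\<Union>v\<in>D. concat_fibre n v) = (\<Sum>v\<in>D. card (concat_fibre n v))"
  proof (rule card_UN_disjoint)
    show "\<forall>v\<in>D. finite (concat_fibre n v)"
      using finite_subset[OF concat_fibre_subset_vecs finite_vecs] by blast
    show "\<forall>v\<in>D. \<forall>v'\<in>D. v \<noteq> v' \<longrightarrow> concat_fibre n v \<inter> concat_fibre n v' = {}"
      using assms concat_fibres_disjoint by blast
  qed
  then show ?thesis
    by (simp add: rho_code_eq_UN card_concat_fibre)
qed

lemma tip_concat_fibre:
  assumes "w \<in> concat_fibre n v" "w' \<in> concat_fibre n v'"
  shows "tip (n * n2) w w' = tip (n * m) v v'"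
proof -
  have "tip n2 (block n2 i w) (block n2 i w') = tip m (block m i v) (block m i v')" if "i < n" for i
    using assms that rho_form by (simp add: concat_fibre_def)
  then show ?thesis
    by (simp add: tip_blocks)
qed

lemma vadd_in_concat_fibre:
  assumes "w \<in> concat_fibre n v" "w' \<in> concat_fibre n v'"
  shows "vadd w w' \<in> concat_fibre n (vadd v v')"
  using assms vadd_in_rho[OF block_in_vecs block_in_vecs]
  by (simp add: concat_fibre_def vadd_in_vecs block_vadd)

lemma zero_in_concat_fibre: "(\<lambda>_. 0) \<in> concat_fibre n (\<lambda>_. 0)"
  by (simp add: concat_fibre_def rho_zero zero_in_C2)

lemma rho_code_mono: "D \<subseteq> D' \<Longrightarrow> rho_code n m n2 \<rho> D \<subseteq> rho_code n m n2 \<rho> D'"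
  by (auto simp: rho_code_def)

lemma additive_rho_code:
  assumes "additive (n * m) D"
  shows "additive (n * n2) (rho_code n m n2 \<rho> D)"
  unfolding additive_def
proof (intro conjI ballI)
  show "rho_code n m n2 \<rho> D \<subseteq> vecs (n * n2)"
    by (auto simp: rho_code_def)
  show "(\<lambda>_. 0) \<in> rho_code n m n2 \<rho> D"
    using assms zero_in_concat_fibre by (auto simp: additive_def rho_code_eq_UN)
  fix w w'
  assume "w \<in> rho_code n m n2 \<rho> D" "w' \<in> rho_code n m n2 \<rho> D"
  then obtain v v' where "v \<in> D" "v' \<in> D" "w \<in> concat_fibre n v" "w' \<in> concat_fibre n v'"
    by (auto simp: rho_code_eq_UN)
  moreover have "vadd v v' \<in> D"
    using assms \<open>v \<in> D\<close> \<open>v' \<in> D\<close> by (simp add: additive_def)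
  ultimately show "vadd w w' \<in> rho_code n m n2 \<rho> D"
    unfolding rho_code_eq_UN by (blast intro: vadd_in_concat_fibre)
qed

text \<open>Words that are \<open>c \<in> C2\<close> in block \<open>i\<close> and zero elsewhere lie over the zero outer word, so
  every block of a vector orthogonal to the concatenated code is orthogonal to \<open>C2\<close>.\<close>
lemma block_in_tdual_C2:
  assumes "(\<lambda>_. 0) \<in> D" "w \<in> tdual (n * n2) (rho_code n m n2 \<rho> D)" "i < n"
  shows "block n2 i w \<in> tdual n2 C2"
proof -
  have "tip n2 c (block n2 i w) = 0" if "c \<in> C2" for c
  proof -
    define f where "f j = (if j = i then c else (\<lambda>_. 0))" for j
    have f: "f j \<in> C2" "f j \<in> vecs n2" for j
      using that zero_in_C2 C2_subset_vecs by (auto simp: f_def)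
    then have "concat_blocks n2 n f \<in> concat_fibre n (\<lambda>_. 0)"
      by (intro concat_blocks_in_concat_fibre) (simp add: rho_zero)
    then have "tip (n * n2) (concat_blocks n2 n f) w = 0"
      using assms(1,2) by (auto simp: tdual_def rho_code_eq_UN)
    moreover have "tip (n * n2) (concat_blocks n2 n f) w = (\<Sum>j<n. tip n2 (f j) (block n2 j w))"
      unfolding tip_blocks by (intro sum.cong) (simp_all add: block_concat_blocks f(2))
    moreover have "\<dots> = (\<Sum>j<n. if j = i then tip n2 c (block n2 i w) else 0)"
      by (intro sum.cong) (simp_all add: f_def)
    ultimately show ?thesis
      using assms(3) by simp
  qed
  then show ?thesis
    by (simp add: tdual_def)
qed

lemma tdual_rho_code_subset:
  assumes "(\<lambda>_. 0) \<in> D" "w \<in> tdual (n * n2) (rho_code n m n2 \<rho> D)"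
  shows "w \<in> rho_code n m n2 \<rho> (tdual (n * m) D)"
proof -
  have "\<forall>i. \<exists>u. i < n \<longrightarrow> u \<in> vecs m \<and> block n2 i w \<in> \<rho> u"
    using block_in_tdual_C2[OF assms] rho_cover by blast
  then obtain u where u: "\<And>i. i < n \<Longrightarrow> u i \<in> vecs m \<and> block n2 i w \<in> \<rho> (u i)"
    by metis
  define v where "v = concat_blocks m n u"
  have w: "w \<in> concat_fibre n v"
    using assms(2) u by (simp add: concat_fibre_def v_def block_concat_blocks tdual_def)
  have "tip (n * m) v' v = 0" if "v' \<in> D" for v'
  proof -
    obtain w' where "w' \<in> concat_fibre n v'"
      using concat_fibre_nonempty by blast
    moreover have "w' \<in> rho_code n m n2 \<rho> D"
      using that calculation by (auto simp: rho_code_eq_UN)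
    ultimately show ?thesis
      using tip_concat_fibre[OF _ w] assms(2) by (auto simp: tdual_def)
  qed
  then have "v \<in> tdual (n * m) D"
    by (simp add: tdual_def v_def)
  with w show ?thesis
    by (auto simp: rho_code_eq_UN)
qed

lemma rho_code_tdual_subset:
  assumes "w \<in> rho_code n m n2 \<rho> (tdual (n * m) D)"
  shows "w \<in> tdual (n * n2) (rho_code n m n2 \<rho> D)"
proof -
  obtain v where v: "v \<in> tdual (n * m) D" "w \<in> concat_fibre n v"
    using assms by (auto simp: rho_code_eq_UN)
  have "tip (n * n2) w' w = 0" if w': "w' \<in> rho_code n m n2 \<rho> D" for w'
  proof -
    obtain v' where "v' \<in> D" "w' \<in> concat_fibre n v'"
      using w' by (auto simp: rho_code_eq_UN)
    then show ?thesis
      using tip_concat_fibre[OF _ v(2)] v(1) by (auto simp: tdual_def)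
  qed
  moreover have "w \<in> vecs (n * n2)"
    using v(2) concat_fibre_subset_vecs by blast
  ultimately show ?thesis
    by (simp add: tdual_def)
qed

lemma tdual_rho_code:
  "(\<lambda>_. 0) \<in> D \<Longrightarrow> tdual (n * n2) (rho_code n m n2 \<rho> D) = rho_code n m n2 \<rho> (tdual (n * m) D)"
  using tdual_rho_code_subset rho_code_tdual_subset by blast

lemma weight_concat_fibre:
  assumes "w \<in> concat_fibre n v"
  shows "d2 * card {i. i < n \<and> block m i v \<noteq> (\<lambda>_. 0)} \<le> weight (n * n2) w"
proof -
  let ?I = "{i. i < n \<and> block m i v \<noteq> (\<lambda>_. 0)}"
  have "d2 \<le> weight n2 (block n2 i w)" if "i \<in> ?I" for i
    using that assms weight_rho[OF block_in_vecs] by (auto simp: concat_fibre_def)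
  then have "d2 * card ?I \<le> (\<Sum>i\<in>?I. weight n2 (block n2 i w))"
    using sum_bounded_below[of ?I d2 "\<lambda>i. weight n2 (block n2 i w)"] by (simp add: mult.commute)
  also have "\<dots> \<le> (\<Sum>i<n. weight n2 (block n2 i w))"
    by (rule sum_mono2) auto
  finally show ?thesis
    by (simp add: weight_blocks)
qed

lemma weight_rho_code_diff:
  assumes "(\<lambda>_. 0) \<in> D"
    and "\<And>v. v \<in> D' \<Longrightarrow> v \<noteq> (\<lambda>_. 0) \<Longrightarrow> t \<le> card {i. i < n \<and> block m i v \<noteq> (\<lambda>_. 0)}"
    and "w \<in> rho_code n m n2 \<rho> D' - rho_code n m n2 \<rho> D"
  shows "d2 * t \<le> weight (n * n2) w"
proof -
  obtain v where v: "v \<in> D'" "w \<in> concat_fibre n v"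
    using assms(3) by (auto simp: rho_code_eq_UN)
  have "v \<noteq> (\<lambda>_. 0)"
    using v(2) assms(1,3) by (auto simp: rho_code_eq_UN)
  then have "d2 * t \<le> d2 * card {i. i < n \<and> block m i v \<noteq> (\<lambda>_. 0)}"
    using assms(2)[OF v(1)] by simp
  also have "\<dots> \<le> weight (n * n2) w"
    using weight_concat_fibre[OF v(2)] .
  finally show ?thesis .
qed

end

section \<open>The concatenated quantum Reed--Solomon code\<close>

lemma rel_min_dist_ge:
  assumes "stabilizer_code N K D (C :: (nat \<Rightarrow> 'q::{field,finite}) set)" "C \<subset> tdual N C"
  shows "real D / real N \<le> rel_min_dist N C"
proof -
  have "finite (tdual N C - C)"
    using finite_subset[of "tdual N C" "vecs N"] by (auto simp: tdual_def)
  moreover have "tdual N C - C \<noteq> {}"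
    using assms(2) by blast
  ultimately have "D \<le> min_dist N C"
    using assms(1) by (simp add: min_dist_def stabilizer_code_def)
  then show ?thesis
    by (simp add: rel_min_dist_def divide_right_mono)
qed

locale quantum_RS_outer_code =
  F4 \<omega> + self_dual_expansion m b + reed_solomon \<alpha> n k
  for \<omega> :: "'q::{field,finite}" and m and b :: "nat \<Rightarrow> 'f::{field,finite}" and \<alpha> :: 'f and n k +
  assumes two_k_less_n: "2 * k < n"
begin

abbreviation outer_code :: "(nat \<Rightarrow> 'q) set" where
  "outer_code \<equiv> omega_lift \<omega> (bin_exp n m b (RS_code n k \<alpha>))"

abbreviation outer_dual_code :: "(nat \<Rightarrow> 'q) set" where
  "outer_dual_code \<equiv> omega_lift \<omega> (bin_exp n m b (std_dual n (RS_code n k \<alpha>)))"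

lemma False_in_bin_exp_RS_code: "(\<lambda>_. False) \<in> bin_exp n m b (RS_code n k \<alpha>)"
  by (rule False_in_bin_exp[OF zero_in_RS_code])

lemma additive_outer_code: "additive (n * m) outer_code"
  by (intro additive_omega_lift bin_exp_subset_bvecs False_in_bin_exp_RS_code xor_in_bin_exp)
    (simp_all add: vadd_in_RS_code)

lemma tdual_outer_code: "tdual (n * m) outer_code = outer_dual_code"
  using bin_exp_std_dual[OF RS_code_subset_vecs smult_in_RS_code]
  by (simp add: tdual_omega_lift[OF False_in_bin_exp_RS_code])

lemma outer_code_subset_dual: "outer_code \<subseteq> outer_dual_code"
  by (intro omega_lift_mono bin_exp_mono RS_code_subset_std_dual two_k_less_n)

lemma outer_dual_code_subset_vecs: "outer_dual_code \<subseteq> vecs (n * m)"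
  by (intro omega_lift_subset_vecs bin_exp_subset_bvecs)

lemma card_omega_lift_bin_exp:
  assumes "D \<subseteq> vecs n"
  shows "card (omega_lift \<omega> (bin_exp n m b D)) = card D ^ 2"
  using assms by (simp add: card_omega_lift finite_bin_exp card_bin_exp)

lemma card_outer_code: "card outer_code = 2 ^ (2 * m * k)"
  by (simp add: card_omega_lift_bin_exp RS_code_subset_vecs card_RS_code card_field
      flip: power_mult)

lemma card_outer_dual_code: "card outer_dual_code = 2 ^ (2 * m * (n - k))"
  by (simp add: card_omega_lift_bin_exp std_dual_subset_vecs card_std_dual_RS card_field
      flip: power_mult)

text \<open>A nonzero word of the dual outer code has a nonzero component \<open>z\<close> in the binary expansion of the
  dual Reed--Solomon code; each nonzero symbol of the Reed--Solomon word expanded by \<open>z\<close>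
  makes the corresponding block nonzero.\<close>
lemma nonzero_blocks_outer_dual_code:
  assumes "v \<in> outer_dual_code" "v \<noteq> (\<lambda>_. 0)"
  shows "k + 1 \<le> card {i. i < n \<and> block m i v \<noteq> (\<lambda>_. 0)}"
proof -
  obtain x y where xy: "x \<in> bin_exp n m b (std_dual n (RS_code n k \<alpha>))"
    "y \<in> bin_exp n m b (std_dual n (RS_code n k \<alpha>))" "v = f4_vec x y"
    using assms(1) by (rule omega_liftE)
  obtain z where z: "z \<in> bin_exp n m b (std_dual n (RS_code n k \<alpha>))" "z \<noteq> (\<lambda>_. False)"
    and v_nonzero: "\<And>p. z p \<Longrightarrow> v p \<noteq> 0"
    using xy assms(2) by (cases "x = (\<lambda>_. False)") (auto simp: f4_vec_eq_0_iff f4_vec_eq_0_at_iff)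
  have "bits_vec z \<noteq> (\<lambda>_. 0)"
    using z inj_onD[OF inj_on_bits_vec, of z "\<lambda>_. False"] by (auto simp: bin_exp_eq bvecs_def)
  then have "k + 1 \<le> weight n (bits_vec z)"
    using z(1) by (intro weight_std_dual_RS) (simp_all add: bin_exp_eq)
  also have "\<dots> \<le> card {i. i < n \<and> block m i v \<noteq> (\<lambda>_. 0)}"
    unfolding weight_def
  proof (rule card_mono)
    show "{i. i < n \<and> bits_vec z i \<noteq> 0} \<subseteq> {i. i < n \<and> block m i v \<noteq> (\<lambda>_. 0)}"
    proof clarify
      fix i
      assume "i < n" "bits_vec z i \<noteq> 0" "block m i v = (\<lambda>_. 0)"
      then obtain j where "j < m" "z (i * m + j)"
        using bits_vec_nonzeroD by blast
      then have "block m i v j \<noteq> 0"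
        by (simp add: block_def v_nonzero)
      with \<open>block m i v = (\<lambda>_. 0)\<close> show False
        by simp
    qed
  qed simp
  finally show ?thesis .
qed

end

locale concatenated_quantum_RS =
  quantum_RS_outer_code \<omega> m b \<alpha> n k + concatenation n2 m d2 C2 \<rho>
  for \<omega> :: "'q::{field,finite}" and m and b :: "nat \<Rightarrow> 'f::{field,finite}" and \<alpha> :: 'f and n k
    and n2 d2 and C2 :: "(nat \<Rightarrow> 'q) set" and \<rho>
begin

abbreviation concat_code :: "(nat \<Rightarrow> 'q) set" where
  "concat_code \<equiv> rho_code n m n2 \<rho> outer_code"

abbreviation concat_dual_code :: "(nat \<Rightarrow> 'q) set" where
  "concat_dual_code \<equiv> rho_code n m n2 \<rho> outer_dual_code"

lemma tdual_concat_code: "tdual (n * n2) concat_code = concat_dual_code"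
  using additive_outer_code by (simp add: additive_def tdual_rho_code tdual_outer_code)

lemma concat_code_subset_dual: "concat_code \<subseteq> concat_dual_code"
  by (intro rho_code_mono outer_code_subset_dual)

lemma card_concat_code: "card concat_code = 2 ^ (n * n2 - m * (n - 2 * k))"
  and card_concat_dual_code: "card concat_dual_code = 2 ^ (n * n2 + m * (n - 2 * k))"
proof -
  obtain a c where a: "n2 = m + a" and c: "n = 2 * k + c"
    using m_le_n2 two_k_less_n by (metis le_Suc_ex less_imp_le_nat)
  have "card concat_code = 2 ^ (2 * m * k) * (2 ^ (n2 - m)) ^ n"
    using additive_outer_code by (simp add: card_rho_code additive_def card_outer_code card_C2)
  also have "\<dots> = 2 ^ (n * n2 - m * (n - 2 * k))"
    by (simp add: a c algebra_simps flip: power_mult power_add)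
  finally show "card concat_code = 2 ^ (n * n2 - m * (n - 2 * k))" .
  have "card concat_dual_code = 2 ^ (2 * m * (n - k)) * (2 ^ (n2 - m)) ^ n"
    by (simp add: card_rho_code outer_dual_code_subset_vecs card_outer_dual_code card_C2)
  also have "\<dots> = 2 ^ (n * n2 + m * (n - 2 * k))"
    by (simp add: a c algebra_simps flip: power_mult power_add)
  finally show "card concat_dual_code = 2 ^ (n * n2 + m * (n - 2 * k))" .
qed

lemma weight_concat_dual_diff:
  "\<forall>w \<in> concat_dual_code - concat_code. d2 * (k + 1) \<le> weight (n * n2) w"
proof -
  have "(\<lambda>_. 0) \<in> outer_code"
    using additive_outer_code by (simp add: additive_def)
  then show ?thesis
    using weight_rho_code_diff[OF _ nonzero_blocks_outer_dual_code] by blast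
qed

lemma stabilizer_code_concat_code:
  "stabilizer_code (n * n2) (m * (n - 2 * k)) (d2 * (k + 1)) concat_code"
proof -
  have "m * (n - 2 * k) \<le> n2 * n"
    using m_le_n2 by (intro mult_le_mono) simp_all
  then show ?thesis
    using additive_rho_code[OF additive_outer_code] concat_code_subset_dual
      card_concat_code weight_concat_dual_diff
    by (simp add: stabilizer_code_def self_orthogonal_def tdual_concat_code mult.commute)
qed

lemma rel_min_dist_concat_code:
  "real d2 / real n2 * (real k / real n) \<le> rel_min_dist (n * n2) concat_code"
proof -
  have "0 < m * (n - 2 * k)"
    using m_pos two_k_less_n by simp
  then have "n * n2 - m * (n - 2 * k) < n * n2 + m * (n - 2 * k)"
    by arith
  then have "card concat_code < card concat_dual_code"
    by (simp add: card_concat_code card_concat_dual_code)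
  then have "concat_code \<subset> tdual (n * n2) concat_code"
    using concat_code_subset_dual by (auto simp: tdual_concat_code)
  then have "real (d2 * (k + 1)) / real (n * n2) \<le> rel_min_dist (n * n2) concat_code"
    by (rule rel_min_dist_ge[OF stabilizer_code_concat_code])
  moreover have "real d2 / real n2 * (real k / real n) \<le> real (d2 * (k + 1)) / real (n * n2)"
    by (simp add: field_simps divide_right_mono)
  ultimately show ?thesis
    by linarith
qed

end

theorem lemma3:
  fixes m n k n2 d2 :: nat
    and \<alpha> :: "'f::{field,finite}"
    and b :: "nat \<Rightarrow> 'f"
    and \<omega> :: "'q::{field,finite}"
    and C2 :: "(nat \<Rightarrow> 'q) set"
    and \<rho> :: "(nat \<Rightarrow> 'q) \<Rightarrow> (nat \<Rightarrow> 'q) set"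
  assumes q4: "card (UNIV :: 'q set) = 4"
    and omega: "\<omega>^2 = \<omega> + 1"
    and m2: "m \<ge> 2"
    and fcard: "card (UNIV :: 'f set) = 2 ^ m"
    and n_def: "n = 2 ^ m - 1"
    and k_lo: "1 \<le> k" and k_hi: "k \<le> 2 ^ (m - 1) - 1"
    and prim: "primitive_elem \<alpha>"
    and sdb: "self_dual_basis m b"
    and inner: "stabilizer_code n2 m d2 C2"
    and rho_bij: "bij_betw \<rho> (vecs m) (cosets_quot n2 C2)"
    and rho_add: "\<forall>u\<in>vecs m. \<forall>v\<in>vecs m. \<rho> (vadd u v) = coset_add (\<rho> u) (\<rho> v)"
    and rho_form: "\<forall>u\<in>vecs m. \<forall>v\<in>vecs m. \<forall>x\<in>\<rho> u. \<forall>y\<in>\<rho> v. tip n2 x y = tip m u v"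
  defines "C1 \<equiv> omega_lift \<omega> (bin_exp n m b (RS_code n k \<alpha>))"
    and "C1perp \<equiv> omega_lift \<omega> (bin_exp n m b (std_dual n (RS_code n k \<alpha>)))"
    and "r \<equiv> real m / real n2"
    and "r' \<equiv> real k / real n"
  shows "additive (n * n2) (rho_code n m n2 \<rho> C1)
    \<and> self_orthogonal (n * n2) (rho_code n m n2 \<rho> C1)
    \<and> tdual (n * n2) (rho_code n m n2 \<rho> C1) = rho_code n m n2 \<rho> C1perp
    \<and> card (rho_code n m n2 \<rho> C1) = 2 ^ (n * n2 - m * (n - 2 * k))
    \<and> card (rho_code n m n2 \<rho> C1perp) = 2 ^ (n * n2 + m * (n - 2 * k))
    \<and> stabilizer_code (n * n2) (m * (n - 2 * k)) (d2 * (k + 1)) (rho_code n m n2 \<rho> C1)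
    \<and> real (m * (n - 2 * k)) / real (n * n2) = r * (1 - 2 * r')
    \<and> (\<forall>v \<in> rho_code n m n2 \<rho> C1perp - rho_code n m n2 \<rho> C1. d2 * (k + 1) \<le> weight (n * n2) v)
    \<and> rel_min_dist (n * n2) (rho_code n m n2 \<rho> C1) \<ge> real d2 / real n2 * r'
    \<and> (real d2 / real n2 \<ge> H4_inv ((1 - r) / 2) \<longrightarrow>
         rel_min_dist (n * n2) (rho_code n m n2 \<rho> C1) \<ge> r' * H4_inv ((1 - r) / 2))"
proof -
  have "2 * k < n" "2 < card (UNIV :: 'f set)"
    using m2 k_hi n_def fcard power_increasing[of 2 m "2::nat"] by (cases m; simp)+
  moreover have "CHAR('q) = 2"
    using q4 CHAR_eq_2_if_card_power_2[of 2] by simp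
  ultimately interpret concatenated_quantum_RS \<omega> m b \<alpha> n k n2 d2 C2 \<rho>
    using q4 omega fcard n_def prim sdb inner rho_bij rho_add rho_form primitive_elem_nonzero[OF prim]
    by unfold_locales simp_all
  have "0 < n2"
    using m_pos m_le_n2 by simp
  then have rate: "real (m * (n - 2 * k)) / real (n * n2) = r * (1 - 2 * r')"
    using n_pos two_k_less_n by (simp add: r_def r'_def field_simps)
  have "r' * H4_inv ((1 - r) / 2) \<le> rel_min_dist (n * n2) (rho_code n m n2 \<rho> C1)"
    if "H4_inv ((1 - r) / 2) \<le> real d2 / real n2"
    using mult_left_mono[OF that, of r'] rel_min_dist_concat_code
    by (simp add: r'_def C1_def mult.commute)
  then show ?thesis
    using additive_rho_code[OF additive_outer_code] concat_code_subset_dual tdual_concat_code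
      card_concat_code card_concat_dual_code stabilizer_code_concat_code rate
      weight_concat_dual_diff rel_min_dist_concat_code
    by (simp add: C1_def C1perp_def r'_def self_orthogonal_def)
qed

end
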